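(* Let $\{w^k\}$ be generated by the L-GADMM iteration and $\{\bar w^k\}$ be the auxiliary sequence. Then for every $k\ge0$ and every $w^*\in\mathcal{W}^*$, $$\|w^{k+1}-w^*\|_H^2\le\|w^k-w^*\|_H^2-\|w^k-\bar w^k\|_N^2.$$
   Context: Standing setting. Let $m\ge 2$, $\ell$, $n_1,\dots,n_m$ be positive integers. For $i=1,\dots,m$ let $\theta_i:\mathbb{R}^{n_i}\to\mathbb{R}$ be convex, $\mathcal{X}_i\subseteq\mathbb{R}^{n_i}$ nonempty closed convex, $A_i\in\mathbb{R}^{\ell\times n_i}$ of full column rank, and $b\in\mathbb{R}^\ell$. Problem (P): $\min\{\sum_{i=1}^m\theta_i(x_i):\sum_{i=1}^mA_ix_i=b,\ x_i\in\mathcal{X}_i\}$, assumed to have a nonempty solution set. Write $u=(x_1,\dots,x_m)$, $w=(x_1,\dots,x_m,y)$ with $y\in\mathbb{R}^\ell$, $\theta(u)=\sum_i\theta_i(x_i)$, $F(w)=(-A_1^\top y,\dots,-A_m^\top y,\ \sum_iA_ix_i-b)$, $\mathcal{W}=\mathcal{X}_1\times\cdots\times\mathcal{X}_m\times\mathbb{R}^\ell$, and $\mathcal{W}^*=\{w^*\in\mathcal{W}:\theta(u)-\theta(u^* )+(w-w^* )^\top F(w^* )\ge0\ \forall w\in\mathcal{W}\}$ (nonempty). For symmetric $G$, $\|v\|_G^2:=v^\top Gv$; $\|\cdot\|$ is the Euclidean norm. Vectors are partitioned as $w=(R,x_m,y)$ with $R=(x_1,\dots,x_{m-1})$. Parameters: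 $\rho>0$, $\gamma\in(0,2)$, symmetric positive definite $P_i\in\mathbb{R}^{n_i\times n_i}$ ($i=1,\dots,m$) such that $G_1\succ0$, where $G_1$ is the symmetric block matrix with diagonal blocks $P_1,\dots,P_{m-1}$ and $(i,j)$ block $-\rho A_i^\top A_j$ for $i\ne j$, $1\le i,j\le m-1$. Matrices (w.r.t. the partition $(R,x_m,y)$): $Q=\begin{pmatrix}G_1&0&0\\0&\rho A_m^\top A_m+P_m&(1-\gamma)A_m^\top\\0&-A_m&\frac1\rho I_\ell\end{pmatrix}$, $M=\begin{pmatrix}I&0&0\\0&I_{n_m}&0\\0&-\rho A_m&\gamma I_\ell\end{pmatrix}$, $H=\begin{pmatrix}G_1&0&0\\0&P_m+\frac\rho\gamma A_m^\top A_m&\frac{1-\gamma}\gamma A_m^\top\\0&\frac{1-\gamma}\gamma A_m&\frac1{\gamma\rho}I_\ell\end{pmatrix}$, $N=Q^\top+Q-M^\top HM$. L-GADMM iteration: from an arbitrary $w^0=(x_1^0,\dots,x_m^0,y^0)\in\mathcal{W}$, for $k=0,1,2,\dots$: $x_j^{k+1}=\arg\min_{x_j\in\mathcal{X}_j}\{\theta_j(x_j)+\frac\rho2\|A_jx_j+\sum_{i=1,i\ne j}^mA_ix_i^k-b-\frac{y^k}\rho\|^2+\frac12\|x_j-x_j^k\|_{P_j}^2\}$ for $j=1,\dots,m-1$; $x_m^{k+1}=\arg\min_{x_m\in\mathcal{X}_m}\{\theta_m(x_m)+\frac\rho2\|\gamma\sum_{i=1}^{m-1}A_ix_i^{k+1}+(1-\gamma)(b-A_mx_m^k)+A_mx_m-b-\frac{y^k}\rho\|^2+\frac12\|x_m-x_m^k\|_{P_m}^2\}$;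 $y^{k+1}=y^k-\rho\big(\gamma\sum_{i=1}^{m-1}A_ix_i^{k+1}+(1-\gamma)(b-A_mx_m^k)+A_mx_m^{k+1}-b\big)$. Auxiliary sequence: $\bar w^k=(\bar x_1^k,\dots,\bar x_m^k,\bar y^k)$ with $\bar x_i^k=x_i^{k+1}$ ($i=1,\dots,m$) and $\bar y^k=y^k-\rho(\sum_{i=1}^{m-1}A_ix_i^{k+1}+A_mx_m^k-b)$; $\bar u^k=(\bar x_1^k,\dots,\bar x_m^k)$, $R^k=(x_1^k,\dots,x_{m-1}^k)$, $\bar R^k=(\bar x_1^k,\dots,\bar x_{m-1}^k)$. *)

theory Defs
  imports "HOL-Analysis.Analysis" "Jordan_Normal_Form.Matrix"
begin

text \<open>Blocks 1..m hold x_1..x_m and block m+1 holds y.\<close>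

definition sqn :: "real vec \<Rightarrow> real" where
  "sqn v = v \<bullet> v"

definition gnorm2 :: "real mat \<Rightarrow> real vec \<Rightarrow> real" where
  "gnorm2 G v = v \<bullet> (G *\<^sub>v v)"

definition vsum :: "nat \<Rightarrow> (nat \<Rightarrow> real vec) \<Rightarrow> nat set \<Rightarrow> real vec" where
  "vsum d f I = vec d (\<lambda>r. \<Sum>i\<in>I. f i $ r)"

definition convex_vset :: "nat \<Rightarrow> real vec set \<Rightarrow> bool" where
  "convex_vset d S \<longleftrightarrow> S \<subseteq> carrier_vec d \<and>
     (\<forall>x\<in>S. \<forall>y\<in>S. \<forall>t::real. 0 \<le> t \<and> t \<le> 1 \<longrightarrow> t \<cdot>\<^sub>v x + (1 - t) \<cdot>\<^sub>v y \<in> S)"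

definition closed_vset :: "nat \<Rightarrow> real vec set \<Rightarrow> bool" where
  "closed_vset d S \<longleftrightarrow> S \<subseteq> carrier_vec d \<and>
     (\<forall>s x. (\<forall>k. s k \<in> S) \<and> x \<in> carrier_vec d \<and> (\<forall>r<d. (\<lambda>k. s k $ r) \<longlonglongrightarrow> x $ r)
        \<longrightarrow> x \<in> S)"

definition convex_vfun :: "nat \<Rightarrow> (real vec \<Rightarrow> real) \<Rightarrow> bool" where
  "convex_vfun d f \<longleftrightarrow> (\<forall>x\<in>carrier_vec d. \<forall>y\<in>carrier_vec d. \<forall>t::real. 0 \<le> t \<and> t \<le> 1 \<longrightarrow>
      f (t \<cdot>\<^sub>v x + (1 - t) \<cdot>\<^sub>v y) \<le> t * f x + (1 - t) * f y)"

definition full_col_rank :: "real mat \<Rightarrow> bool" where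
  "full_col_rank A \<longleftrightarrow> (\<forall>v\<in>carrier_vec (dim_col A). A *\<^sub>v v = 0\<^sub>v (dim_row A) \<longrightarrow> v = 0\<^sub>v (dim_col A))"

definition sym_posdef :: "nat \<Rightarrow> real mat \<Rightarrow> bool" where
  "sym_posdef d P \<longleftrightarrow> P \<in> carrier_mat d d \<and> transpose_mat P = P \<and>
     (\<forall>v\<in>carrier_vec d. v \<noteq> 0\<^sub>v d \<longrightarrow> v \<bullet> (P *\<^sub>v v) > 0)"

definition bqf :: "nat set \<Rightarrow> (nat \<Rightarrow> nat \<Rightarrow> real mat) \<Rightarrow> (nat \<Rightarrow> real vec) \<Rightarrow> real" where
  "bqf I B v = (\<Sum>i\<in>I. \<Sum>j\<in>I. v i \<bullet> (B i j *\<^sub>v v j))"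

definition btrans :: "(nat \<Rightarrow> nat \<Rightarrow> real mat) \<Rightarrow> nat \<Rightarrow> nat \<Rightarrow> real mat" where
  "btrans B i j = transpose_mat (B j i)"

definition badd :: "(nat \<Rightarrow> nat \<Rightarrow> real mat) \<Rightarrow> (nat \<Rightarrow> nat \<Rightarrow> real mat) \<Rightarrow> nat \<Rightarrow> nat \<Rightarrow> real mat" where
  "badd B C i j = B i j + C i j"

definition bsub :: "(nat \<Rightarrow> nat \<Rightarrow> real mat) \<Rightarrow> (nat \<Rightarrow> nat \<Rightarrow> real mat) \<Rightarrow> nat \<Rightarrow> nat \<Rightarrow> real mat" where
  "bsub B C i j = B i j - C i j"

definition bmul :: "(nat \<Rightarrow> nat) \<Rightarrow> nat set \<Rightarrow> (nat \<Rightarrow> nat \<Rightarrow> real mat) \<Rightarrow> (nat \<Rightarrow> nat \<Rightarrow> real mat)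
    \<Rightarrow> nat \<Rightarrow> nat \<Rightarrow> real mat" where
  "bmul d I B C i j = mat (d i) (d j) (\<lambda>(r, s). \<Sum>k\<in>I. (B i k * C k j) $$ (r, s))"

definition bdim :: "nat \<Rightarrow> nat \<Rightarrow> (nat \<Rightarrow> nat) \<Rightarrow> nat \<Rightarrow> nat" where
  "bdim m l n i = (if i \<le> m then n i else l)"

definition G1blk :: "nat \<Rightarrow> real \<Rightarrow> (nat \<Rightarrow> real mat) \<Rightarrow> (nat \<Rightarrow> real mat) \<Rightarrow> nat \<Rightarrow> nat \<Rightarrow> real mat" where
  "G1blk m \<rho> A P i j = (if i = j then P i else (- \<rho>) \<cdot>\<^sub>m (transpose_mat (A i) * A j))"

definition Hblk :: "nat \<Rightarrow> nat \<Rightarrow> (nat \<Rightarrow> nat) \<Rightarrow> real \<Rightarrow> real \<Rightarrow> (nat \<Rightarrow> real mat) \<Rightarrow> (nat \<Rightarrow> real mat)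
    \<Rightarrow> nat \<Rightarrow> nat \<Rightarrow> real mat" where
  "Hblk m l n \<rho> \<gamma> A P i j =
    (if i < m \<and> j < m then G1blk m \<rho> A P i j
     else if i = m \<and> j = m then P m + (\<rho> / \<gamma>) \<cdot>\<^sub>m (transpose_mat (A m) * A m)
     else if i = m \<and> j = m + 1 then ((1 - \<gamma>) / \<gamma>) \<cdot>\<^sub>m transpose_mat (A m)
     else if i = m + 1 \<and> j = m then ((1 - \<gamma>) / \<gamma>) \<cdot>\<^sub>m A m
     else if i = m + 1 \<and> j = m + 1 then (1 / (\<gamma> * \<rho>)) \<cdot>\<^sub>m 1\<^sub>m l
     else 0\<^sub>m (bdim m l n i) (bdim m l n j))"

definition Qblk :: "nat \<Rightarrow> nat \<Rightarrow> (nat \<Rightarrow> nat) \<Rightarrow> real \<Rightarrow> real \<Rightarrow> (nat \<Rightarrow> real mat) \<Rightarrow> (nat \<Rightarrow> real mat)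
    \<Rightarrow> nat \<Rightarrow> nat \<Rightarrow> real mat" where
  "Qblk m l n \<rho> \<gamma> A P i j =
    (if i < m \<and> j < m then G1blk m \<rho> A P i j
     else if i = m \<and> j = m then \<rho> \<cdot>\<^sub>m (transpose_mat (A m) * A m) + P m
     else if i = m \<and> j = m + 1 then (1 - \<gamma>) \<cdot>\<^sub>m transpose_mat (A m)
     else if i = m + 1 \<and> j = m then - A m
     else if i = m + 1 \<and> j = m + 1 then (1 / \<rho>) \<cdot>\<^sub>m 1\<^sub>m l
     else 0\<^sub>m (bdim m l n i) (bdim m l n j))"

definition Mblk :: "nat \<Rightarrow> nat \<Rightarrow> (nat \<Rightarrow> nat) \<Rightarrow> real \<Rightarrow> real \<Rightarrow> (nat \<Rightarrow> real mat)
    \<Rightarrow> nat \<Rightarrow> nat \<Rightarrow> real mat" where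
  "Mblk m l n \<rho> \<gamma> A i j =
    (if i = j \<and> i \<le> m then 1\<^sub>m (n i)
     else if i = m + 1 \<and> j = m then (- \<rho>) \<cdot>\<^sub>m A m
     else if i = m + 1 \<and> j = m + 1 then \<gamma> \<cdot>\<^sub>m 1\<^sub>m l
     else 0\<^sub>m (bdim m l n i) (bdim m l n j))"

definition Nblk :: "nat \<Rightarrow> nat \<Rightarrow> (nat \<Rightarrow> nat) \<Rightarrow> real \<Rightarrow> real \<Rightarrow> (nat \<Rightarrow> real mat) \<Rightarrow> (nat \<Rightarrow> real mat)
    \<Rightarrow> nat \<Rightarrow> nat \<Rightarrow> real mat" where
  "Nblk m l n \<rho> \<gamma> A P =
    (let Q = Qblk m l n \<rho> \<gamma> A P; M = Mblk m l n \<rho> \<gamma> A; H = Hblk m l n \<rho> \<gamma> A P;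
         d = bdim m l n; I = {1..m+1}
     in bsub (badd (btrans Q) Q) (bmul d I (btrans M) (bmul d I H M)))"

definition wvec :: "nat \<Rightarrow> (nat \<Rightarrow> real vec) \<Rightarrow> real vec \<Rightarrow> nat \<Rightarrow> real vec" where
  "wvec m x y i = (if i \<le> m then x i else y)"

definition wdiff :: "(nat \<Rightarrow> real vec) \<Rightarrow> (nat \<Rightarrow> real vec) \<Rightarrow> nat \<Rightarrow> real vec" where
  "wdiff v w i = v i - w i"

definition Fblk :: "nat \<Rightarrow> nat \<Rightarrow> (nat \<Rightarrow> real mat) \<Rightarrow> real vec \<Rightarrow> (nat \<Rightarrow> real vec) \<Rightarrow> real vec
    \<Rightarrow> nat \<Rightarrow> real vec" where
  "Fblk m l A b x y i = (if i \<le> m then - (transpose_mat (A i) *\<^sub>v y)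
                         else vsum l (\<lambda>j. A j *\<^sub>v x j) {1..m} - b)"

definition Wstar :: "nat \<Rightarrow> nat \<Rightarrow> (nat \<Rightarrow> nat) \<Rightarrow> (nat \<Rightarrow> real vec \<Rightarrow> real) \<Rightarrow> (nat \<Rightarrow> real vec set)
    \<Rightarrow> (nat \<Rightarrow> real mat) \<Rightarrow> real vec \<Rightarrow> ((nat \<Rightarrow> real vec) \<times> real vec) set" where
  "Wstar m l n \<theta> X A b = {(xs, ys).
     (\<forall>i\<in>{1..m}. xs i \<in> X i) \<and> ys \<in> carrier_vec l \<and>
     (\<forall>x y. (\<forall>i\<in>{1..m}. x i \<in> X i) \<and> y \<in> carrier_vec l \<longrightarrow>
        (\<Sum>i\<in>{1..m}. \<theta> i (x i)) - (\<Sum>i\<in>{1..m}. \<theta> i (xs i))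
        + (\<Sum>i\<in>{1..m+1}. wdiff (wvec m x y) (wvec m xs ys) i \<bullet> Fblk m l A b xs ys i) \<ge> 0)}"

end

theory Submission
  imports Defs
begin

text \<open>The auxiliary point \<open>w\<^sup>~ = (x\<^sup>k\<^sup>+\<^sup>1, y\<^sup>~\<^sup>k)\<close> satisfies the first-order conditions of the
  proximal subproblems; summed over the blocks they say that for every feasible \<open>w\<close>
  \<open>\<theta>(u) - \<theta>(u\<^sup>~) + (w - w\<^sup>~)\<^sup>T F(w\<^sup>~) \<ge> (w - w\<^sup>~)\<^sup>T Q (w\<^sup>k - w\<^sup>~)\<close>.
  Taking \<open>w = w\<^sup>*\<close> and adding the inequality defining \<open>w\<^sup>* \<in> W\<^sup>*\<close> at \<open>w\<^sup>~\<close>, the \<open>F\<close>-terms cancel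
  because \<open>F\<close> is affine with a skew-symmetric matrix, leaving \<open>(w\<^sup>~ - w\<^sup>*)\<^sup>T Q (w\<^sup>k - w\<^sup>~) \<ge> 0\<close>.
  The iteration reads \<open>w\<^sup>k\<^sup>+\<^sup>1 = w\<^sup>k - M (w\<^sup>k - w\<^sup>~)\<close>, and \<open>H M = Q\<close> with \<open>H\<close> symmetric, so
  expanding \<open>\<parallel>w\<^sup>k\<^sup>+\<^sup>1 - w\<^sup>*\<parallel>\<^sub>H\<^sup>2\<close> gives the decrease by \<open>\<parallel>w\<^sup>k - w\<^sup>~\<parallel>\<^sub>N\<^sup>2\<close>,
  \<open>N = Q\<^sup>T + Q - M\<^sup>T H M\<close>.\<close>

unbundle no inner_syntax
unbundle no vec_syntax

section \<open>Finite sums of vectors\<close>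

lemma index_vsum: "r < d \<Longrightarrow> vsum d f I $ r = (\<Sum>i\<in>I. f i $ r)"
  by (simp add: vsum_def)

lemma dim_vsum [simp]: "dim_vec (vsum d f I) = d"
  by (simp add: vsum_def)

lemma vsum_carrier [simp]: "vsum d f I \<in> carrier_vec d"
  by (rule carrier_vecI) simp

lemma vsum_cong: "(\<And>i. i \<in> I \<Longrightarrow> f i = g i) \<Longrightarrow> vsum d f I = vsum d g I"
  by (simp add: vsum_def)

lemma vsum_insert:
  assumes "finite I" "i \<notin> I"
  shows "vsum d f (insert i I) = f i + vsum d f I"
  by (rule eq_vecI) (use assms in \<open>auto simp: index_vsum\<close>)

lemma scalar_prod_as_sum: "w \<in> carrier_vec k \<Longrightarrow> a \<bullet> w = (\<Sum>r\<in>{0..<k}. a $ r * w $ r)"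
  by (simp add: scalar_prod_def carrier_vecD)

lemma scalar_prod_vsum:
  assumes "finite I" "\<forall>i\<in>I. f i \<in> carrier_vec k"
  shows "a \<bullet> vsum k f I = (\<Sum>i\<in>I. a \<bullet> f i)"
proof -
  have "a \<bullet> vsum k f I = (\<Sum>r\<in>{0..<k}. \<Sum>i\<in>I. a $ r * f i $ r)"
    by (simp add: scalar_prod_def index_vsum sum_distrib_left)
  also have "\<dots> = (\<Sum>i\<in>I. \<Sum>r\<in>{0..<k}. a $ r * f i $ r)"
    by (rule sum.swap)
  also have "\<dots> = (\<Sum>i\<in>I. a \<bullet> f i)"
    using assms(2) by (intro sum.cong refl scalar_prod_as_sum[symmetric]) auto
  finally show ?thesis .
qed

lemma mult_mat_vec_vsum:
  assumes "finite I" "B \<in> carrier_mat r k" "\<forall>i\<in>I. f i \<in> carrier_vec k"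
  shows "B *\<^sub>v vsum k f I = vsum r (\<lambda>i. B *\<^sub>v f i) I"
proof (rule eq_vecI)
  fix s assume "s < dim_vec (vsum r (\<lambda>i. B *\<^sub>v f i) I)"
  then have s: "s < dim_row B" using assms(2) by simp
  have "(B *\<^sub>v vsum k f I) $ s = (\<Sum>i\<in>I. row B s \<bullet> f i)"
    using s by (simp add: scalar_prod_vsum[OF assms(1,3)])
  then show "(B *\<^sub>v vsum k f I) $ s = vsum r (\<lambda>i. B *\<^sub>v f i) I $ s"
    using s assms(2) by (simp add: index_vsum)
qed (use assms(2) in simp)

lemma vsum_mono_neutral:
  assumes "finite I" "J \<subseteq> I" "\<forall>i\<in>I-J. f i = 0\<^sub>v k"
  shows "vsum k f I = vsum k f J"
proof (rule eq_vecI)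
  fix r assume "r < dim_vec (vsum k f J)"
  then show "vsum k f I $ r = vsum k f J $ r"
    using assms by (simp add: index_vsum, intro sum.mono_neutral_right) auto
qed simp

lemma vsum_diff:
  assumes "\<forall>i\<in>I. g i \<in> carrier_vec k"
  shows "vsum k (\<lambda>i. f i - g i) I = vsum k f I - vsum k g I"
proof (rule eq_vecI)
  fix r assume "r < dim_vec (vsum k f I - vsum k g I)"
  then have r: "r < k" by simp
  have "(\<Sum>i\<in>I. (f i - g i) $ r) = (\<Sum>i\<in>I. f i $ r - g i $ r)"
    using assms r by (intro sum.cong refl index_minus_vec) auto
  then show "vsum k (\<lambda>i. f i - g i) I $ r = (vsum k f I - vsum k g I) $ r"
    using r by (simp add: index_vsum sum_subtractf)
qed simp

lemma vsum_smult:
  assumes "\<forall>i\<in>I. f i \<in> carrier_vec k"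
  shows "vsum k (\<lambda>i. c \<cdot>\<^sub>v f i) I = c \<cdot>\<^sub>v vsum k f I"
proof (rule eq_vecI)
  fix r assume "r < dim_vec (c \<cdot>\<^sub>v vsum k f I)"
  then have r: "r < k" by simp
  have "(\<Sum>i\<in>I. (c \<cdot>\<^sub>v f i) $ r) = (\<Sum>i\<in>I. c * f i $ r)"
    using assms r by (intro sum.cong refl) auto
  then show "vsum k (\<lambda>i. c \<cdot>\<^sub>v f i) I $ r = (c \<cdot>\<^sub>v vsum k f I) $ r"
    using r by (simp add: index_vsum sum_distrib_left)
qed simp

lemma vsum_swap:
  "vsum k (\<lambda>j. vsum k (\<lambda>i. g j i) I) J = vsum k (\<lambda>i. vsum k (\<lambda>j. g j i) J) I"
  by (rule eq_vecI) (simp_all add: index_vsum sum.swap[of _ I J])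

lemma index_mult_mat_vec_sum:
  assumes "M \<in> carrier_mat a c" "w \<in> carrier_vec c" "s < a"
  shows "(M *\<^sub>v w) $ s = (\<Sum>t\<in>{0..<c}. M $$ (s,t) * w $ t)"
  using assms by (simp add: scalar_prod_as_sum)

lemma zero_mat_mult_vec: "v \<in> carrier_vec b \<Longrightarrow> 0\<^sub>m a b *\<^sub>v v = 0\<^sub>v a"
  by (intro eq_vecI) (auto simp: scalar_prod_as_sum)

lemma smult_mat_mult_vec:
  assumes "A \<in> carrier_mat a b" "v \<in> carrier_vec b"
  shows "(c \<cdot>\<^sub>m A) *\<^sub>v v = c \<cdot>\<^sub>v (A *\<^sub>v (v :: real vec))"
  by (rule eq_vecI) (use assms in \<open>auto simp: scalar_prod_as_sum sum_distrib_left mult.assoc\<close>)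

lemma transpose_smult_mat: "transpose_mat (c \<cdot>\<^sub>m A) = c \<cdot>\<^sub>m transpose_mat A"
  by (intro eq_matI) auto


lemma scalar_prod_transpose_mult_vec:
  fixes A :: "real mat"
  assumes "A \<in> carrier_mat l k" "a \<in> carrier_vec k" "y \<in> carrier_vec l"
  shows "a \<bullet> (transpose_mat A *\<^sub>v y) = y \<bullet> (A *\<^sub>v a)"
proof -
  have "a \<bullet> (transpose_mat A *\<^sub>v y) = (transpose_mat A *\<^sub>v y) \<bullet> a"
    using assms by (intro comm_scalar_prod[of _ k]) auto
  also have "\<dots> = y \<bullet> (A *\<^sub>v a)"
    using assms by (rule transpose_vec_mult_scalar)
  finally show ?thesis .
qed

lemma scalar_prod_diff_neg_add:
  fixes u v a q :: "real vec"
  assumes "u \<in> carrier_vec k" "v \<in> carrier_vec k" "a \<in> carrier_vec k" "q \<in> carrier_vec k"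
  shows "(u - v) \<bullet> (- a - q) = - ((v - u) \<bullet> - a) + (v - u) \<bullet> q"
  using assms by (simp add: scalar_prod_as_sum[of _ k] sum.distrib[symmetric] sum_negf[symmetric] algebra_simps)

section \<open>Block vectors and block matrices\<close>

definition block_vec :: "(nat \<Rightarrow> nat) \<Rightarrow> nat set \<Rightarrow> (nat \<Rightarrow> real vec) \<Rightarrow> bool" where
  "block_vec d I v \<longleftrightarrow> (\<forall>i\<in>I. v i \<in> carrier_vec (d i))"

definition block_mat :: "(nat \<Rightarrow> nat) \<Rightarrow> nat set \<Rightarrow> (nat \<Rightarrow> nat \<Rightarrow> real mat) \<Rightarrow> bool" where
  "block_mat d I B \<longleftrightarrow> (\<forall>i\<in>I. \<forall>j\<in>I. B i j \<in> carrier_mat (d i) (d j))"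

definition bform :: "nat set \<Rightarrow> (nat \<Rightarrow> nat \<Rightarrow> real mat) \<Rightarrow> (nat \<Rightarrow> real vec) \<Rightarrow> (nat \<Rightarrow> real vec) \<Rightarrow> real"
  where "bform I B u v = (\<Sum>i\<in>I. \<Sum>j\<in>I. u i \<bullet> (B i j *\<^sub>v v j))"

definition bmult_vec :: "(nat \<Rightarrow> nat) \<Rightarrow> nat set \<Rightarrow> (nat \<Rightarrow> nat \<Rightarrow> real mat) \<Rightarrow> (nat \<Rightarrow> real vec)
    \<Rightarrow> nat \<Rightarrow> real vec" where
  "bmult_vec d I B v i = vsum (d i) (\<lambda>j. B i j *\<^sub>v v j) I"

lemma bqf_eq_bform: "bqf I B v = bform I B v v"
  by (simp add: bqf_def bform_def)

lemma block_vecD: "block_vec d I v \<Longrightarrow> i \<in> I \<Longrightarrow> v i \<in> carrier_vec (d i)"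
  by (simp add: block_vec_def)

lemma block_matD: "block_mat d I B \<Longrightarrow> i \<in> I \<Longrightarrow> j \<in> I \<Longrightarrow> B i j \<in> carrier_mat (d i) (d j)"
  by (simp add: block_mat_def)

lemma bmult_vec_carrier: "bmult_vec d I B v i \<in> carrier_vec (d i)"
  by (simp add: bmult_vec_def)

lemma block_vec_bmult_vec: "block_vec d I (bmult_vec d I B v)"
  by (simp add: block_vec_def bmult_vec_carrier)

lemma block_vec_diff: "block_vec d I u \<Longrightarrow> block_vec d I v \<Longrightarrow> block_vec d I (\<lambda>i. u i - v i)"
  by (simp add: block_vec_def)

lemma block_mat_btrans: "block_mat d I B \<Longrightarrow> block_mat d I (btrans B)"
  by (simp add: block_mat_def btrans_def)

lemma block_mat_badd: "block_mat d I B \<Longrightarrow> block_mat d I C \<Longrightarrow> block_mat d I (badd B C)"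
  by (simp add: block_mat_def badd_def)

lemma block_mat_bmul: "block_mat d I (bmul d I B C)"
  by (simp add: block_mat_def bmul_def)

lemma block_mat_mult_vec_carrier:
  "block_mat d I B \<Longrightarrow> block_vec d I v \<Longrightarrow> i \<in> I \<Longrightarrow> j \<in> I \<Longrightarrow> B i j *\<^sub>v v j \<in> carrier_vec (d i)"
  by (meson block_matD block_vecD mult_mat_vec_carrier)

lemma bform_bmult_vec:
  assumes "finite I" "block_mat d I B" "block_vec d I v"
  shows "bform I B u v = (\<Sum>i\<in>I. u i \<bullet> bmult_vec d I B v i)"
  unfolding bform_def bmult_vec_def
  using assms block_mat_mult_vec_carrier by (intro sum.cong refl scalar_prod_vsum[symmetric]) auto

lemma bmult_vec_mono_neutral:
  assumes "finite I" "J \<subseteq> I" "\<forall>j\<in>I-J. B i j = 0\<^sub>m (d i) (d j)" "block_vec d I v"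
  shows "bmult_vec d I B v i = vsum (d i) (\<lambda>j. B i j *\<^sub>v v j) J"
  unfolding bmult_vec_def
  using assms by (intro vsum_mono_neutral) (auto simp: block_vec_def zero_mat_mult_vec)

lemma bmult_vec_one:
  assumes "finite I" "i0 \<in> I" "\<forall>j\<in>I-{i0}. B i j = 0\<^sub>m (d i) (d j)" "block_vec d I v"
    "B i i0 \<in> carrier_mat (d i) (d i0)"
  shows "bmult_vec d I B v i = B i i0 *\<^sub>v v i0"
proof -
  have "bmult_vec d I B v i = vsum (d i) (\<lambda>j. B i j *\<^sub>v v j) {i0}"
    using assms by (intro bmult_vec_mono_neutral) auto
  also have "\<dots> = B i i0 *\<^sub>v v i0"
    using assms(5) by (intro eq_vecI) (auto simp: index_vsum)
  finally show ?thesis .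
qed

lemma bmult_vec_two:
  assumes "finite I" "i0 \<in> I" "i1 \<in> I" "i0 \<noteq> i1" "\<forall>j\<in>I-{i0,i1}. B i j = 0\<^sub>m (d i) (d j)"
    "block_vec d I v" "B i i0 \<in> carrier_mat (d i) (d i0)" "B i i1 \<in> carrier_mat (d i) (d i1)"
  shows "bmult_vec d I B v i = B i i0 *\<^sub>v v i0 + B i i1 *\<^sub>v v i1"
proof -
  have "bmult_vec d I B v i = vsum (d i) (\<lambda>j. B i j *\<^sub>v v j) {i0,i1}"
    using assms by (intro bmult_vec_mono_neutral) auto
  also have "\<dots> = B i i0 *\<^sub>v v i0 + B i i1 *\<^sub>v v i1"
    using assms(4,7,8) by (intro eq_vecI) (auto simp: index_vsum)
  finally show ?thesis .
qed

lemma bmul_mult_vec: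
  assumes "finite I" "block_mat d I B" "block_mat d I C" "i \<in> I" "j \<in> I" "w \<in> carrier_vec (d j)"
  shows "bmul d I B C i j *\<^sub>v w = vsum (d i) (\<lambda>k. B i k *\<^sub>v (C k j *\<^sub>v w)) I"
proof (rule eq_vecI)
  fix s assume "s < dim_vec (vsum (d i) (\<lambda>k. B i k *\<^sub>v (C k j *\<^sub>v w)) I)"
  then have s: "s < d i" by simp
  have B: "\<And>k. k \<in> I \<Longrightarrow> B i k \<in> carrier_mat (d i) (d k)"
    and C: "\<And>k. k \<in> I \<Longrightarrow> C k j \<in> carrier_mat (d k) (d j)"
    using assms(2-5) by (auto intro: block_matD)
  have "(bmul d I B C i j *\<^sub>v w) $ s = (\<Sum>t\<in>{0..<d j}. bmul d I B C i j $$ (s,t) * w $ t)"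
    using s assms(6) by (intro index_mult_mat_vec_sum) (simp_all add: bmul_def)
  also have "\<dots> = (\<Sum>t\<in>{0..<d j}. \<Sum>k\<in>I. (B i k * C k j) $$ (s,t) * w $ t)"
    using s by (intro sum.cong refl) (simp add: bmul_def sum_distrib_right)
  also have "\<dots> = (\<Sum>k\<in>I. \<Sum>t\<in>{0..<d j}. (B i k * C k j) $$ (s,t) * w $ t)"
    by (rule sum.swap)
  also have "\<dots> = (\<Sum>k\<in>I. ((B i k * C k j) *\<^sub>v w) $ s)"
    using B C assms(6) s by (intro sum.cong refl index_mult_mat_vec_sum[symmetric]) (auto intro: mult_carrier_mat)
  also have "\<dots> = (\<Sum>k\<in>I. (B i k *\<^sub>v (C k j *\<^sub>v w)) $ s)"
    using B C assms(6) by (intro sum.cong refl) (metis assoc_mult_mat_vec)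
  also have "\<dots> = vsum (d i) (\<lambda>k. B i k *\<^sub>v (C k j *\<^sub>v w)) I $ s"
    using s by (simp add: index_vsum)
  finally show "(bmul d I B C i j *\<^sub>v w) $ s = vsum (d i) (\<lambda>k. B i k *\<^sub>v (C k j *\<^sub>v w)) I $ s" .
qed (simp add: bmul_def)

lemma bmult_vec_bmul:
  assumes "finite I" "block_mat d I B" "block_mat d I C" "block_vec d I v" "i \<in> I"
  shows "bmult_vec d I (bmul d I B C) v i = bmult_vec d I B (bmult_vec d I C v) i"
proof -
  have "bmult_vec d I (bmul d I B C) v i
      = vsum (d i) (\<lambda>k. vsum (d i) (\<lambda>j. B i k *\<^sub>v (C k j *\<^sub>v v j)) I) I"
    unfolding bmult_vec_def using assms
    by (subst vsum_swap[symmetric]) (intro vsum_cong bmul_mult_vec; auto simp: block_vec_def)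
  also have "\<dots> = vsum (d i) (\<lambda>k. B i k *\<^sub>v vsum (d k) (\<lambda>j. C k j *\<^sub>v v j) I) I"
    using assms block_mat_mult_vec_carrier[OF assms(3,4)]
    by (intro vsum_cong mult_mat_vec_vsum[symmetric]) (auto intro: block_matD)
  finally show ?thesis by (simp add: bmult_vec_def)
qed

lemma bform_cong:
  "(\<And>i. i \<in> I \<Longrightarrow> u i = u' i) \<Longrightarrow> (\<And>i. i \<in> I \<Longrightarrow> v i = v' i) \<Longrightarrow> bform I B u v = bform I B u' v'"
  by (simp add: bform_def)

lemma bform_btrans:
  assumes "block_mat d I B" "block_vec d I u" "block_vec d I v"
  shows "bform I (btrans B) u v = bform I B v u"
proof -
  have "u i \<bullet> (transpose_mat (B j i) *\<^sub>v v j) = v j \<bullet> (B j i *\<^sub>v u i)" if "i \<in> I" "j \<in> I" for i j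
  proof -
    have B: "B j i \<in> carrier_mat (d j) (d i)" and u: "u i \<in> carrier_vec (d i)"
      and v: "v j \<in> carrier_vec (d j)"
      using assms that by (auto intro: block_matD block_vecD)
    then have "u i \<bullet> (transpose_mat (B j i) *\<^sub>v v j) = (transpose_mat (B j i) *\<^sub>v v j) \<bullet> u i"
      by (intro comm_scalar_prod[of _ "d i"]) auto
    also have "\<dots> = v j \<bullet> (B j i *\<^sub>v u i)"
      by (rule transpose_vec_mult_scalar[OF B u v])
    finally show ?thesis .
  qed
  then have "bform I (btrans B) u v = (\<Sum>i\<in>I. \<Sum>j\<in>I. v j \<bullet> (B j i *\<^sub>v u i))"
    unfolding bform_def btrans_def by (intro sum.cong refl) auto
  also have "\<dots> = bform I B v u"
    unfolding bform_def by (rule sum.swap)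
  finally show ?thesis .
qed

lemma bform_sym:
  assumes "block_mat d I B" "\<forall>i\<in>I. \<forall>j\<in>I. B i j = transpose_mat (B j i)"
    "block_vec d I u" "block_vec d I v"
  shows "bform I B u v = bform I B v u"
proof -
  have "bform I B u v = bform I (btrans B) u v"
    unfolding bform_def btrans_def using assms(2) by (intro sum.cong refl) metis
  then show ?thesis
    using bform_btrans[OF assms(1,3,4)] by simp
qed

lemma bform_badd:
  assumes "block_mat d I B" "block_mat d I C" "block_vec d I u" "block_vec d I v"
  shows "bform I (badd B C) u v = bform I B u v + bform I C u v"
  unfolding bform_def sum.distrib[symmetric]
proof (intro sum.cong refl)
  fix i j assume "i \<in> I" "j \<in> I"
  then have B: "B i j \<in> carrier_mat (d i) (d j)" and C: "C i j \<in> carrier_mat (d i) (d j)"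
    and u: "u i \<in> carrier_vec (d i)" and v: "v j \<in> carrier_vec (d j)"
    using assms by (auto intro: block_matD block_vecD)
  then show "u i \<bullet> (badd B C i j *\<^sub>v v j) = u i \<bullet> (B i j *\<^sub>v v j) + u i \<bullet> (C i j *\<^sub>v v j)"
    by (simp add: badd_def add_mult_distrib_mat_vec[OF B C v] scalar_prod_add_distrib[OF u])
qed

lemma bform_bsub:
  assumes "block_mat d I B" "block_mat d I C" "block_vec d I u" "block_vec d I v"
  shows "bform I (bsub B C) u v = bform I B u v - bform I C u v"
  unfolding bform_def sum_subtractf[symmetric]
proof (intro sum.cong refl)
  fix i j assume "i \<in> I" "j \<in> I"
  then have B: "B i j \<in> carrier_mat (d i) (d j)" and C: "C i j \<in> carrier_mat (d i) (d j)"
    and u: "u i \<in> carrier_vec (d i)" and v: "v j \<in> carrier_vec (d j)"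
    using assms by (auto intro: block_matD block_vecD)
  then show "u i \<bullet> (bsub B C i j *\<^sub>v v j) = u i \<bullet> (B i j *\<^sub>v v j) - u i \<bullet> (C i j *\<^sub>v v j)"
    by (simp add: bsub_def minus_mult_distrib_mat_vec[OF B C v] scalar_prod_minus_distrib[OF u])
qed

lemma bform_diff_left:
  assumes "block_mat d I B" "block_vec d I u" "block_vec d I u'" "block_vec d I v"
  shows "bform I B (\<lambda>i. u i - u' i) v = bform I B u v - bform I B u' v"
  unfolding bform_def sum_subtractf[symmetric]
proof (intro sum.cong refl)
  fix i j assume "i \<in> I" "j \<in> I"
  then have "B i j *\<^sub>v v j \<in> carrier_vec (d i)" and "u i \<in> carrier_vec (d i)" "u' i \<in> carrier_vec (d i)"
    using assms by (auto intro: block_mat_mult_vec_carrier block_vecD)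
  then show "(u i - u' i) \<bullet> (B i j *\<^sub>v v j) = u i \<bullet> (B i j *\<^sub>v v j) - u' i \<bullet> (B i j *\<^sub>v v j)"
    by (simp add: minus_scalar_prod_distrib)
qed

lemma bform_diff_right:
  assumes "block_mat d I B" "block_vec d I u" "block_vec d I v" "block_vec d I v'"
  shows "bform I B u (\<lambda>i. v i - v' i) = bform I B u v - bform I B u v'"
  unfolding bform_def sum_subtractf[symmetric]
proof (intro sum.cong refl)
  fix i j assume "i \<in> I" "j \<in> I"
  then have B: "B i j \<in> carrier_mat (d i) (d j)" and u: "u i \<in> carrier_vec (d i)"
    and v: "v j \<in> carrier_vec (d j)" "v' j \<in> carrier_vec (d j)"
    using assms by (auto intro: block_matD block_vecD)
  then show "u i \<bullet> (B i j *\<^sub>v (v j - v' j)) = u i \<bullet> (B i j *\<^sub>v v j) - u i \<bullet> (B i j *\<^sub>v v' j)"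
    by (simp add: mult_minus_distrib_mat_vec[OF B v] scalar_prod_minus_distrib[OF u])
qed

lemma bform_bmul:
  assumes "finite I" "block_mat d I B" "block_mat d I C" "block_vec d I v"
  shows "bform I (bmul d I B C) u v = bform I B u (bmult_vec d I C v)"
proof -
  have "bform I (bmul d I B C) u v = (\<Sum>i\<in>I. u i \<bullet> bmult_vec d I (bmul d I B C) v i)"
    by (rule bform_bmult_vec[OF assms(1) block_mat_bmul assms(4)])
  also have "\<dots> = (\<Sum>i\<in>I. u i \<bullet> bmult_vec d I B (bmult_vec d I C v) i)"
    using assms by (intro sum.cong refl) (simp add: bmult_vec_bmul)
  also have "\<dots> = bform I B u (bmult_vec d I C v)"
    by (rule bform_bmult_vec[OF assms(1,2) block_vec_bmult_vec, symmetric])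
  finally show ?thesis .
qed

lemma bform_QtQ_minus_MtHM:
  assumes fin: "finite I" and H: "block_mat d I H" and Q: "block_mat d I Q" and M: "block_mat d I M"
    and v: "block_vec d I v"
  shows "bform I (bsub (badd (btrans Q) Q) (bmul d I (btrans M) (bmul d I H M))) v v
    = 2 * bform I Q v v - bform I H (bmult_vec d I M v) (bmult_vec d I M v)"
proof -
  let ?Mv = "bmult_vec d I M v" and ?HMv = "bmult_vec d I (bmul d I H M) v"
  have "bform I (bmul d I (btrans M) (bmul d I H M)) v v = bform I (btrans M) v ?HMv"
    by (rule bform_bmul[OF fin block_mat_btrans[OF M] block_mat_bmul v])
  also have "\<dots> = bform I M ?HMv v"
    by (rule bform_btrans[OF M v block_vec_bmult_vec])
  also have "\<dots> = (\<Sum>i\<in>I. ?HMv i \<bullet> ?Mv i)"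
    by (rule bform_bmult_vec[OF fin M v])
  also have "\<dots> = (\<Sum>i\<in>I. ?Mv i \<bullet> bmult_vec d I H ?Mv i)"
  proof (rule sum.cong[OF refl])
    fix i assume i: "i \<in> I"
    show "?HMv i \<bullet> ?Mv i = ?Mv i \<bullet> bmult_vec d I H ?Mv i"
      unfolding bmult_vec_bmul[OF fin H M v i] by (rule comm_scalar_prod[OF bmult_vec_carrier bmult_vec_carrier])
  qed
  also have "\<dots> = bform I H ?Mv ?Mv"
    by (rule bform_bmult_vec[OF fin H block_vec_bmult_vec, symmetric])
  finally have "bform I (bmul d I (btrans M) (bmul d I H M)) v v = bform I H ?Mv ?Mv" .
  then show ?thesis
    using bform_bsub[OF block_mat_badd[OF block_mat_btrans[OF Q] Q] block_mat_bmul v v]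
      bform_badd[OF block_mat_btrans[OF Q] Q v v] bform_btrans[OF Q v v]
    by simp
qed

text \<open>Read with \<open>a = w\<^sup>k - w\<^sup>*\<close>, \<open>dd = w\<^sup>k - w\<^sup>~\<^sup>k\<close>, \<open>g = w\<^sup>~\<^sup>k - w\<^sup>*\<close> and
  \<open>e = w\<^sup>k\<^sup>+\<^sup>1 - w\<^sup>*\<close>: expanding \<open>\<parallel>a - M dd\<parallel>\<^sub>H\<^sup>2\<close> and using \<open>H M = Q\<close> turns the cross term into
  \<open>a\<^sup>T Q dd\<close>, which \<open>g\<^sup>T Q dd \<ge> 0\<close> bounds below by \<open>dd\<^sup>T Q dd\<close>.\<close>
lemma bform_contraction:
  assumes fin: "finite I"
    and H: "block_mat d I H" and Q: "block_mat d I Q" and M: "block_mat d I M"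
    and H_sym: "\<forall>i\<in>I. \<forall>j\<in>I. H i j = transpose_mat (H j i)"
    and HM_eq_Q: "\<And>v i. block_vec d I v \<Longrightarrow> i \<in> I \<Longrightarrow> bmult_vec d I H (bmult_vec d I M v) i = bmult_vec d I Q v i"
    and a: "block_vec d I a" and dd: "block_vec d I dd" and g: "block_vec d I g"
    and g_eq: "\<And>i. i \<in> I \<Longrightarrow> g i = a i - dd i"
    and e_eq: "\<And>i. i \<in> I \<Longrightarrow> e i = a i - bmult_vec d I M dd i"
    and VI: "bform I Q g dd \<ge> 0"
  shows "bform I H e e
    \<le> bform I H a a - bform I (bsub (badd (btrans Q) Q) (bmul d I (btrans M) (bmul d I H M))) dd dd"
proof -
  let ?Md = "bmult_vec d I M dd"
  have Md: "block_vec d I ?Md" by (rule block_vec_bmult_vec)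
  have "bform I H a ?Md = (\<Sum>i\<in>I. a i \<bullet> bmult_vec d I H ?Md i)"
    by (rule bform_bmult_vec[OF fin H Md])
  also have "\<dots> = bform I Q a dd"
    using HM_eq_Q[OF dd] by (simp add: bform_bmult_vec[OF fin Q dd])
  finally have HaMd: "bform I H a ?Md = bform I Q a dd" .
  have "bform I H e e = bform I H (\<lambda>i. a i - ?Md i) (\<lambda>i. a i - ?Md i)"
    by (rule bform_cong) (simp_all add: e_eq)
  also have "\<dots> = bform I H a a - 2 * bform I H a ?Md + bform I H ?Md ?Md"
    using bform_sym[OF H H_sym Md a]
    by (simp add: bform_diff_left[OF H a Md block_vec_diff[OF a Md]] bform_diff_right[OF H _ a Md] a Md)
  finally have He: "bform I H e e = bform I H a a - 2 * bform I Q a dd + bform I H ?Md ?Md"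
    using HaMd by simp
  have "bform I Q g dd = bform I Q a dd - bform I Q dd dd"
    using bform_cong[of I g "\<lambda>i. a i - dd i" dd dd Q] g_eq bform_diff_left[OF Q a dd dd] by simp
  then show ?thesis
    using He VI bform_QtQ_minus_MtHM[OF fin H Q M dd] by simp
qed

section \<open>First-order optimality of the proximal subproblems\<close>

lemma sqn_add_smult:
  fixes u w :: "real vec"
  assumes u: "u \<in> carrier_vec k" and w: "w \<in> carrier_vec k"
  shows "sqn (u + t \<cdot>\<^sub>v w) = sqn u + 2 * t * (u \<bullet> w) + t^2 * sqn w"
proof -
  have tw: "t \<cdot>\<^sub>v w \<in> carrier_vec k" using w by simp
  have "sqn (u + t \<cdot>\<^sub>v w) = u \<bullet> (u + t \<cdot>\<^sub>v w) + (t \<cdot>\<^sub>v w) \<bullet> (u + t \<cdot>\<^sub>v w)"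
    unfolding sqn_def by (rule add_scalar_prod_distrib[OF u tw]) (use u w in simp)
  also have "\<dots> = (u \<bullet> u + u \<bullet> (t \<cdot>\<^sub>v w)) + ((t \<cdot>\<^sub>v w) \<bullet> u + (t \<cdot>\<^sub>v w) \<bullet> (t \<cdot>\<^sub>v w))"
    by (simp only: scalar_prod_add_distrib[OF u u tw] scalar_prod_add_distrib[OF tw u tw])
  also have "\<dots> = u \<bullet> u + t * (u \<bullet> w) + t * (w \<bullet> u) + t * (t * (w \<bullet> w))"
    using u w by simp
  also have "w \<bullet> u = u \<bullet> w" by (rule comm_scalar_prod[OF w u])
  finally show ?thesis unfolding sqn_def by (simp add: power2_eq_square algebra_simps)
qed

lemma gnorm2_add_smult:
  fixes P :: "real mat"
  assumes P: "P \<in> carrier_mat k k" and Ps: "transpose_mat P = P"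
    and p: "p \<in> carrier_vec k" and h: "h \<in> carrier_vec k"
  shows "gnorm2 P (p + t \<cdot>\<^sub>v h) = gnorm2 P p + 2 * t * (h \<bullet> (P *\<^sub>v p)) + t^2 * gnorm2 P h"
proof -
  have th: "t \<cdot>\<^sub>v h \<in> carrier_vec k" using h by simp
  have Pp: "P *\<^sub>v p \<in> carrier_vec k" and Ph: "P *\<^sub>v h \<in> carrier_vec k" using P p h by auto
  have Pth: "P *\<^sub>v (t \<cdot>\<^sub>v h) = t \<cdot>\<^sub>v (P *\<^sub>v h)" by (rule mult_mat_vec[OF P h])
  have e1: "P *\<^sub>v (p + t \<cdot>\<^sub>v h) = P *\<^sub>v p + t \<cdot>\<^sub>v (P *\<^sub>v h)"
    by (simp only: mult_add_distrib_mat_vec[OF P p th] Pth)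
  have tPh: "t \<cdot>\<^sub>v (P *\<^sub>v h) \<in> carrier_vec k" using Ph by simp
  have "gnorm2 P (p + t \<cdot>\<^sub>v h) = (p + t \<cdot>\<^sub>v h) \<bullet> (P *\<^sub>v p + t \<cdot>\<^sub>v (P *\<^sub>v h))"
    unfolding gnorm2_def e1 by (rule refl)
  also have "\<dots> = p \<bullet> (P *\<^sub>v p + t \<cdot>\<^sub>v (P *\<^sub>v h)) + (t \<cdot>\<^sub>v h) \<bullet> (P *\<^sub>v p + t \<cdot>\<^sub>v (P *\<^sub>v h))"
    by (rule add_scalar_prod_distrib[OF p th]) (use Pp tPh in simp)
  also have "\<dots> = (p \<bullet> (P *\<^sub>v p) + p \<bullet> (t \<cdot>\<^sub>v (P *\<^sub>v h))) + ((t \<cdot>\<^sub>v h) \<bullet> (P *\<^sub>v p) + (t \<cdot>\<^sub>v h) \<bullet> (t \<cdot>\<^sub>v (P *\<^sub>v h)))"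
    by (simp only: scalar_prod_add_distrib[OF p Pp tPh] scalar_prod_add_distrib[OF th Pp tPh])
  also have "\<dots> = p \<bullet> (P *\<^sub>v p) + t * (p \<bullet> (P *\<^sub>v h)) + t * (h \<bullet> (P *\<^sub>v p)) + t * (t * (h \<bullet> (P *\<^sub>v h)))"
    using p h Pp Ph by simp
  also have "p \<bullet> (P *\<^sub>v h) = h \<bullet> (P *\<^sub>v p)"
  proof -
    have "p \<bullet> (P *\<^sub>v h) = (transpose_mat P *\<^sub>v p) \<bullet> h" by (rule transpose_vec_mult_scalar[OF P h p, symmetric])
    also have "\<dots> = (P *\<^sub>v p) \<bullet> h" using Ps by simp
    also have "\<dots> = h \<bullet> (P *\<^sub>v p)" by (rule comm_scalar_prod[OF Pp h])
    finally show ?thesis .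
  qed
  finally show ?thesis unfolding gnorm2_def by (simp add: power2_eq_square algebra_simps)
qed

lemma nonneg_of_linear_plus_quadratic_nonneg:
  fixes G C :: real
  assumes "\<And>t. 0 < t \<Longrightarrow> t \<le> 1 \<Longrightarrow> 0 \<le> t * G + t^2 * C"
  shows "0 \<le> G"
proof (rule ccontr)
  assume "\<not> 0 \<le> G" then have G: "G < 0" by simp
  show False
  proof (cases "C \<le> 0")
    case True
    have "0 \<le> 1 * G + 1^2 * C" using assms[of 1] by simp
    then show False using G True by simp
  next
    case False
    define t where "t = min 1 (- G / (2 * C))"
    have t0: "0 < t" using G False by (simp add: t_def divide_neg_pos)
    have t1: "t \<le> 1" by (simp add: t_def)
    have tC: "t * C \<le> - G / 2" using False
      by (simp add: t_def min_def field_simps)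
    have "0 \<le> t * G + t^2 * C" using assms t0 t1 by simp
    also have "t * G + t^2 * C = t * (G + t * C)" by (simp add: power2_eq_square algebra_simps)
    finally have "0 \<le> G + t * C" using t0 by (simp add: zero_le_mult_iff)
    then show False using tC G by linarith
  qed
qed

lemma convex_arg_min_first_order:
  fixes \<theta> q :: "real vec \<Rightarrow> real"
  assumes \<theta>: "convex_vfun k \<theta>" and X: "convex_vset k X"
    and am: "is_arg_min (\<lambda>z. \<theta> z + q z) (\<lambda>z. z \<in> X) zs" and z: "z \<in> X"
    and q: "\<And>t. 0 < t \<Longrightarrow> t \<le> 1 \<Longrightarrow> q (t \<cdot>\<^sub>v z + (1 - t) \<cdot>\<^sub>v zs) = q zs + t * D + t^2 * C"
  shows "\<theta> z - \<theta> zs + D \<ge> 0"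
proof -
  have zs: "zs \<in> X" and zs_min: "\<And>y. y \<in> X \<Longrightarrow> \<theta> zs + q zs \<le> \<theta> y + q y"
    using am by (auto simp: is_arg_min_def not_less)
  have carrier: "z \<in> carrier_vec k" "zs \<in> carrier_vec k"
    using X z zs by (auto simp: convex_vset_def)
  have "0 \<le> t * (\<theta> z - \<theta> zs + D) + t^2 * C" if t: "0 < t" "t \<le> 1" for t
  proof -
    let ?zt = "t \<cdot>\<^sub>v z + (1 - t) \<cdot>\<^sub>v zs"
    have "?zt \<in> X" using X z zs t unfolding convex_vset_def by auto
    then have "\<theta> zs + q zs \<le> \<theta> ?zt + q ?zt" by (rule zs_min)
    moreover have "\<theta> ?zt \<le> t * \<theta> z + (1 - t) * \<theta> zs"
      using \<theta>[unfolded convex_vfun_def, rule_format, OF carrier] t by simp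
    moreover have "t * (\<theta> z - \<theta> zs + D) + t^2 * C
        = (t * \<theta> z + (1 - t) * \<theta> zs + (q zs + t * D + t^2 * C)) - (\<theta> zs + q zs)"
      by (simp add: algebra_simps)
    ultimately show ?thesis using q[OF t] by linarith
  qed
  then show ?thesis by (rule nonneg_of_linear_plus_quadratic_nonneg)
qed

lemma prox_penalty_along_segment:
  fixes A P :: "real mat" and \<rho> :: real
  assumes A: "A \<in> carrier_mat l k" and c: "c \<in> carrier_vec l"
    and P: "P \<in> carrier_mat k k" and P_sym: "transpose_mat P = P" and x0: "x0 \<in> carrier_vec k"
    and z: "z \<in> carrier_vec k" and zs: "zs \<in> carrier_vec k"
  defines "q \<equiv> \<lambda>z. \<rho> / 2 * sqn (A *\<^sub>v z + c) + 1 / 2 * gnorm2 P (z - x0)"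
    and "q' \<equiv> \<lambda>h. \<rho> / 2 * sqn (A *\<^sub>v h) + 1 / 2 * gnorm2 P h"
  shows "q (t \<cdot>\<^sub>v z + (1 - t) \<cdot>\<^sub>v zs)
    = q zs + t * ((z - zs) \<bullet> (\<rho> \<cdot>\<^sub>v (transpose_mat A *\<^sub>v (A *\<^sub>v zs + c)) + P *\<^sub>v (zs - x0)))
      + t^2 * q' (z - zs)"
proof -
  define h where "h = z - zs"
  define u where "u = A *\<^sub>v zs + c"
  define p where "p = zs - x0"
  have h: "h \<in> carrier_vec k" and u: "u \<in> carrier_vec l" and p: "p \<in> carrier_vec k"
    and Ah: "A *\<^sub>v h \<in> carrier_vec l" and Atu: "transpose_mat A *\<^sub>v u \<in> carrier_vec k"
    and Pp: "P *\<^sub>v p \<in> carrier_vec k"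
    using A c P x0 z zs by (auto simp: h_def u_def p_def)
  have seg: "t \<cdot>\<^sub>v z + (1 - t) \<cdot>\<^sub>v zs = zs + t \<cdot>\<^sub>v h"
    unfolding h_def by (rule eq_vecI) (use z zs in \<open>auto simp: algebra_simps\<close>)
  have "A *\<^sub>v (zs + t \<cdot>\<^sub>v h) + c = u + t \<cdot>\<^sub>v (A *\<^sub>v h)"
    unfolding u_def using A zs h c
    by (simp add: mult_add_distrib_mat_vec[OF A zs] mult_mat_vec[OF A h]) (rule eq_vecI; simp)
  moreover have "zs + t \<cdot>\<^sub>v h - x0 = p + t \<cdot>\<^sub>v h"
    unfolding p_def by (rule eq_vecI) (use zs x0 h in \<open>auto simp: algebra_simps\<close>)
  moreover have "h \<bullet> (\<rho> \<cdot>\<^sub>v (transpose_mat A *\<^sub>v u) + P *\<^sub>v p) = \<rho> * (u \<bullet> (A *\<^sub>v h)) + h \<bullet> (P *\<^sub>v p)"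
    using h Atu Pp transpose_vec_mult_scalar[OF A h u] comm_scalar_prod[OF h Atu]
    by (simp add: scalar_prod_add_distrib[OF h])
  ultimately show ?thesis
    unfolding q_def q'_def seg h_def[symmetric] u_def[symmetric] p_def[symmetric]
    by (simp add: sqn_add_smult[OF u Ah] gnorm2_add_smult[OF P P_sym p h] algebra_simps)
qed

lemma is_arg_min_prox_optimality:
  fixes \<theta> :: "real vec \<Rightarrow> real" and F :: "real vec \<Rightarrow> real vec" and A P :: "real mat"
  assumes \<theta>: "convex_vfun k \<theta>" and X: "convex_vset k X"
    and A: "A \<in> carrier_mat l k" and c: "c \<in> carrier_vec l"
    and F: "\<And>z. z \<in> carrier_vec k \<Longrightarrow> F z = A *\<^sub>v z + c"
    and P: "P \<in> carrier_mat k k" and P_sym: "transpose_mat P = P" and x0: "x0 \<in> carrier_vec k"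
    and am: "is_arg_min (\<lambda>z. \<theta> z + \<rho> / 2 * sqn (F z) + 1 / 2 * gnorm2 P (z - x0)) (\<lambda>z. z \<in> X) zs"
    and z: "z \<in> X"
  shows "\<theta> z - \<theta> zs + (z - zs) \<bullet> (\<rho> \<cdot>\<^sub>v (transpose_mat A *\<^sub>v (A *\<^sub>v zs + c)) + P *\<^sub>v (zs - x0)) \<ge> 0"
proof -
  let ?q = "\<lambda>z. \<rho> / 2 * sqn (A *\<^sub>v z + c) + 1 / 2 * gnorm2 P (z - x0)"
  have Xc: "X \<subseteq> carrier_vec k" using X by (simp add: convex_vset_def)
  have "is_arg_min (\<lambda>z. \<theta> z + ?q z) (\<lambda>z. z \<in> X) zs"
    using am Xc F by (auto simp: is_arg_min_def add.assoc subset_iff)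
  moreover have "zs \<in> carrier_vec k" using am Xc by (auto simp: is_arg_min_def)
  ultimately show ?thesis
    using prox_penalty_along_segment[OF A c P P_sym x0] z Xc
    by (intro convex_arg_min_first_order[OF \<theta> X]) auto
qed

section \<open>Partitioned vectors and the skew-symmetric operator \<open>F\<close>\<close>

lemma wdiff_wvec_x: "i \<le> m \<Longrightarrow> wdiff (wvec m u yu) (wvec m v yv) i = u i - v i"
  by (simp add: wdiff_def wvec_def)

lemma wdiff_wvec_y: "wdiff (wvec m u yu) (wvec m v yv) (Suc m) = yu - yv"
  by (simp add: wdiff_def wvec_def)

lemma block_vec_wvec:
  assumes "\<And>i. i \<in> {1..m} \<Longrightarrow> u i \<in> carrier_vec (n i)" "yu \<in> carrier_vec l"
  shows "block_vec (bdim m l n) {1..m+1} (wvec m u yu)"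
  unfolding block_vec_def using assms by (auto simp: wvec_def bdim_def)

lemma block_vec_wdiff: "block_vec d I u \<Longrightarrow> block_vec d I v \<Longrightarrow> block_vec d I (wdiff u v)"
  by (simp add: block_vec_def wdiff_def)

lemma wdiff_eq_diff_wdiff:
  assumes "block_vec d I u" "block_vec d I v" "block_vec d I z" "i \<in> I"
  shows "wdiff v z i = wdiff u z i - wdiff u v i"
proof -
  have "u i \<in> carrier_vec (d i)" "v i \<in> carrier_vec (d i)" "z i \<in> carrier_vec (d i)"
    using assms by (auto intro: block_vecD)
  then show ?thesis by (intro eq_vecI) (auto simp: wdiff_def)
qed

text \<open>The pairing \<open>(w - w')\<^sup>T F(w)\<close> does not depend on whether \<open>F\<close> is evaluated at \<open>w\<close> or at \<open>w'\<close>: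
  the difference is the quadratic form of the skew-symmetric matrix defining \<open>F\<close>.\<close>
lemma Fblk_skew_pairing:
  assumes A: "\<forall>i\<in>{1..m}. A i \<in> carrier_mat l (n i)" and b: "b \<in> carrier_vec l"
    and u: "\<And>i. i \<in> {1..m} \<Longrightarrow> u i \<in> carrier_vec (n i)"
    and v: "\<And>i. i \<in> {1..m} \<Longrightarrow> v i \<in> carrier_vec (n i)"
    and yu: "yu \<in> carrier_vec l" and yv: "yv \<in> carrier_vec l"
  shows "(\<Sum>i\<in>{1..m+1}. wdiff (wvec m u yu) (wvec m v yv) i \<bullet> Fblk m l A b u yu i)
       = (\<Sum>i\<in>{1..m+1}. wdiff (wvec m u yu) (wvec m v yv) i \<bullet> Fblk m l A b v yv i)"
proof -
  let ?g = "wdiff (wvec m u yu) (wvec m v yv)"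
  let ?r = "\<lambda>i. A i *\<^sub>v (u i - v i)"
  have r: "\<And>i. i \<in> {1..m} \<Longrightarrow> ?r i \<in> carrier_vec l"
    using A u v by (meson minus_carrier_vec mult_mat_vec_carrier)
  have x_part: "?g i \<bullet> Fblk m l A b u yu i = ?g i \<bullet> Fblk m l A b v yv i - (yu - yv) \<bullet> ?r i"
    if i: "i \<in> {1..m}" for i
  proof -
    have Ai: "A i \<in> carrier_mat l (n i)" and vi: "v i \<in> carrier_vec (n i)"
      and a: "u i - v i \<in> carrier_vec (n i)"
      using A u v i by auto
    have "(u i - v i) \<bullet> - (transpose_mat (A i) *\<^sub>v y) = - (y \<bullet> ?r i)" if y: "y \<in> carrier_vec l" for y
    proof -
      have "(u i - v i) \<bullet> - (transpose_mat (A i) *\<^sub>v y) = - ((u i - v i) \<bullet> (transpose_mat (A i) *\<^sub>v y))"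
        by (rule scalar_prod_uminus_right) (use Ai vi in auto)
      then show ?thesis
        using scalar_prod_transpose_mult_vec[OF Ai a y] by simp
    qed
    then show ?thesis
      using i yu yv r[OF i]
      by (simp add: wdiff_wvec_x Fblk_def minus_scalar_prod_distrib[OF yu yv])
  qed
  have "(yu - yv) \<bullet> (vsum l (\<lambda>j. A j *\<^sub>v u j) {1..m} - b)
      = (yu - yv) \<bullet> (vsum l (\<lambda>j. A j *\<^sub>v v j) {1..m} - b) + (yu - yv) \<bullet> vsum l ?r {1..m}"
  proof -
    have "vsum l ?r {1..m} = vsum l (\<lambda>j. A j *\<^sub>v u j) {1..m} - vsum l (\<lambda>j. A j *\<^sub>v v j) {1..m}"
      using A u v by (subst vsum_diff[symmetric]) (auto intro!: vsum_cong mult_minus_distrib_mat_vec)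
    then show ?thesis
      using yu yv b by (simp add: scalar_prod_minus_distrib[of _ l] scalar_prod_add_distrib[of _ l])
  qed
  then have y_part: "?g (m+1) \<bullet> Fblk m l A b u yu (m+1)
      = ?g (m+1) \<bullet> Fblk m l A b v yv (m+1) + (\<Sum>i\<in>{1..m}. (yu - yv) \<bullet> ?r i)"
    using r by (simp add: wdiff_wvec_y Fblk_def scalar_prod_vsum)
  have split: "\<And>f. (\<Sum>i\<in>{1..m+1}. f i) = f (m+1) + (\<Sum>i\<in>{1..m}. f i)"
    by (simp add: add.commute)
  show ?thesis
    unfolding split using x_part y_part by (simp add: sum_subtractf)
qed

section \<open>The matrices \<open>H\<close>, \<open>Q\<close> and \<open>M\<close>\<close>

lemma HM_row_x_identity:
  fixes A P :: "real mat"
  assumes A: "A \<in> carrier_mat l k" and P: "P \<in> carrier_mat k k" and x: "x \<in> carrier_vec k"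
    and y: "y \<in> carrier_vec l" and \<gamma>: "\<gamma> \<noteq> 0"
  shows "(P + (\<rho> / \<gamma>) \<cdot>\<^sub>m (transpose_mat A * A)) *\<^sub>v x
       + ((1 - \<gamma>) / \<gamma>) \<cdot>\<^sub>m transpose_mat A *\<^sub>v ((- \<rho>) \<cdot>\<^sub>v (A *\<^sub>v x) + \<gamma> \<cdot>\<^sub>v y)
     = (\<rho> \<cdot>\<^sub>m (transpose_mat A * A) + P) *\<^sub>v x + (1 - \<gamma>) \<cdot>\<^sub>m transpose_mat A *\<^sub>v y"
proof -
  have At: "transpose_mat A \<in> carrier_mat k l" using A by simp
  have AA: "transpose_mat A * A \<in> carrier_mat k k" using A by simp
  have AAx: "(transpose_mat A * A) *\<^sub>v x = transpose_mat A *\<^sub>v (A *\<^sub>v x)"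
    by (rule assoc_mult_mat_vec[OF At A x])
  let ?u = "transpose_mat A *\<^sub>v (A *\<^sub>v x)" and ?v = "transpose_mat A *\<^sub>v y"
  have u: "?u \<in> carrier_vec k" and v: "?v \<in> carrier_vec k" and Px: "P *\<^sub>v x \<in> carrier_vec k"
    using A P x y by auto
  have "(P + (\<rho> / \<gamma>) \<cdot>\<^sub>m (transpose_mat A * A)) *\<^sub>v x
       + ((1 - \<gamma>) / \<gamma>) \<cdot>\<^sub>m transpose_mat A *\<^sub>v ((- \<rho>) \<cdot>\<^sub>v (A *\<^sub>v x) + \<gamma> \<cdot>\<^sub>v y)
     = P *\<^sub>v x + (\<rho> / \<gamma>) \<cdot>\<^sub>v ?u + ((1 - \<gamma>) / \<gamma>) \<cdot>\<^sub>v ((- \<rho>) \<cdot>\<^sub>v ?u + \<gamma> \<cdot>\<^sub>v ?v)"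
    using A P x y At AA
    by (simp add: add_mult_distrib_mat_vec[of _ k k] smult_mat_mult_vec[OF AA x] AAx
        mult_add_distrib_mat_vec[OF At] mult_mat_vec[OF At] smult_mat_mult_vec[OF At])
  also have "\<dots> = \<rho> \<cdot>\<^sub>v ?u + P *\<^sub>v x + (1 - \<gamma>) \<cdot>\<^sub>v ?v"
    by (rule eq_vecI) (use u v Px \<gamma> in \<open>auto simp: field_simps\<close>)
  also have "\<dots> = (\<rho> \<cdot>\<^sub>m (transpose_mat A * A) + P) *\<^sub>v x + (1 - \<gamma>) \<cdot>\<^sub>m transpose_mat A *\<^sub>v y"
    using A P x y At AA
    by (simp add: add_mult_distrib_mat_vec[of _ k k] smult_mat_mult_vec[OF AA x] AAx smult_mat_mult_vec[OF At y])
  finally show ?thesis .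
qed

lemma HM_row_y_identity:
  fixes A :: "real mat"
  assumes A: "A \<in> carrier_mat l k" and x: "x \<in> carrier_vec k" and y: "y \<in> carrier_vec l"
    and \<gamma>: "\<gamma> \<noteq> 0" and \<rho>: "\<rho> \<noteq> 0"
  shows "((1 - \<gamma>) / \<gamma>) \<cdot>\<^sub>m A *\<^sub>v x + (1 / (\<gamma> * \<rho>)) \<cdot>\<^sub>m 1\<^sub>m l *\<^sub>v ((- \<rho>) \<cdot>\<^sub>v (A *\<^sub>v x) + \<gamma> \<cdot>\<^sub>v y)
     = - A *\<^sub>v x + (1 / \<rho>) \<cdot>\<^sub>m 1\<^sub>m l *\<^sub>v y"
proof -
  have Ax: "A *\<^sub>v x \<in> carrier_vec l" using A x by simp
  have "((1 - \<gamma>) / \<gamma>) \<cdot>\<^sub>m A *\<^sub>v x + (1 / (\<gamma> * \<rho>)) \<cdot>\<^sub>m 1\<^sub>m l *\<^sub>v ((- \<rho>) \<cdot>\<^sub>v (A *\<^sub>v x) + \<gamma> \<cdot>\<^sub>v y)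
     = ((1 - \<gamma>) / \<gamma>) \<cdot>\<^sub>v (A *\<^sub>v x) + (1 / (\<gamma> * \<rho>)) \<cdot>\<^sub>v ((- \<rho>) \<cdot>\<^sub>v (A *\<^sub>v x) + \<gamma> \<cdot>\<^sub>v y)"
    using A x Ax y by (simp add: smult_mat_mult_vec[OF A x] smult_mat_mult_vec[of _ l l])
  also have "\<dots> = - (A *\<^sub>v x) + (1 / \<rho>) \<cdot>\<^sub>v y"
    by (rule eq_vecI) (use A Ax y \<gamma> \<rho> in \<open>auto simp: field_simps\<close>)
  also have "\<dots> = - A *\<^sub>v x + (1 / \<rho>) \<cdot>\<^sub>m 1\<^sub>m l *\<^sub>v y"
    using A x y by (simp add: smult_mat_mult_vec[of _ l l])
  finally show ?thesis .
qed

lemma Q_row_m_as_transpose: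
  fixes A P :: "real mat"
  assumes A: "A \<in> carrier_mat l k" and P: "P \<in> carrier_mat k k"
    and dx: "dx \<in> carrier_vec k" and dy: "dy \<in> carrier_vec l"
  shows "(\<rho> \<cdot>\<^sub>m (transpose_mat A * A) + P) *\<^sub>v dx + (1 - \<gamma>) \<cdot>\<^sub>m transpose_mat A *\<^sub>v dy
    = P *\<^sub>v dx + transpose_mat A *\<^sub>v (\<rho> \<cdot>\<^sub>v (A *\<^sub>v dx) + (1 - \<gamma>) \<cdot>\<^sub>v dy)"
proof -
  have At: "transpose_mat A \<in> carrier_mat k l" and AA: "transpose_mat A * A \<in> carrier_mat k k"
    using A by auto
  have "(\<rho> \<cdot>\<^sub>m (transpose_mat A * A) + P) *\<^sub>v dx + (1 - \<gamma>) \<cdot>\<^sub>m transpose_mat A *\<^sub>v dy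
      = \<rho> \<cdot>\<^sub>v (transpose_mat A *\<^sub>v (A *\<^sub>v dx)) + P *\<^sub>v dx + (1 - \<gamma>) \<cdot>\<^sub>v (transpose_mat A *\<^sub>v dy)"
    using A P AA dx dy
    by (simp add: add_mult_distrib_mat_vec[of _ k k] smult_mat_mult_vec[OF AA dx]
        assoc_mult_mat_vec[OF At A dx] smult_mat_mult_vec[OF At dy])
  also have "\<dots> = P *\<^sub>v dx + (\<rho> \<cdot>\<^sub>v (transpose_mat A *\<^sub>v (A *\<^sub>v dx)) + (1 - \<gamma>) \<cdot>\<^sub>v (transpose_mat A *\<^sub>v dy))"
    using A P At dx dy by (intro eq_vecI) auto
  also have "\<dots> = P *\<^sub>v dx + transpose_mat A *\<^sub>v (\<rho> \<cdot>\<^sub>v (A *\<^sub>v dx) + (1 - \<gamma>) \<cdot>\<^sub>v dy)"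
    using A At dx dy by (simp add: mult_add_distrib_mat_vec[OF At] mult_mat_vec[OF At])
  finally show ?thesis .
qed

lemma transpose_residual_gradient:
  fixes At P :: "real mat"
  assumes At: "At \<in> carrier_mat k l" and P: "P \<in> carrier_mat k k"
    and r: "r \<in> carrier_vec l" and s: "s \<in> carrier_vec l" and yb: "yb \<in> carrier_vec l"
    and xb: "xb \<in> carrier_vec k" and xk: "xk \<in> carrier_vec k"
    and res: "\<rho> \<cdot>\<^sub>v r = - yb - s"
  shows "\<rho> \<cdot>\<^sub>v (At *\<^sub>v r) + P *\<^sub>v (xb - xk) = - (At *\<^sub>v yb) - (P *\<^sub>v (xk - xb) + At *\<^sub>v s)"
proof -
  have "\<rho> \<cdot>\<^sub>v (At *\<^sub>v r) = At *\<^sub>v (\<rho> \<cdot>\<^sub>v r)"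
    by (rule mult_mat_vec[OF At r, symmetric])
  also have "\<rho> \<cdot>\<^sub>v r = (- 1) \<cdot>\<^sub>v (yb + s)"
    using res yb s by (intro eq_vecI) auto
  also have "At *\<^sub>v ((- 1) \<cdot>\<^sub>v (yb + s)) = (- 1) \<cdot>\<^sub>v (At *\<^sub>v yb + At *\<^sub>v s)"
    using At yb s by (simp add: mult_mat_vec[OF At] mult_add_distrib_mat_vec[OF At])
  finally have "\<rho> \<cdot>\<^sub>v (At *\<^sub>v r) = (- 1) \<cdot>\<^sub>v (At *\<^sub>v yb + At *\<^sub>v s)" .
  moreover have "P *\<^sub>v (xb - xk) = P *\<^sub>v xb - P *\<^sub>v xk" "P *\<^sub>v (xk - xb) = P *\<^sub>v xk - P *\<^sub>v xb"
    using P xb xk by (simp_all add: mult_minus_distrib_mat_vec[OF P])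
  ultimately show ?thesis
    using At P yb s xb xk by (intro eq_vecI) (auto simp: algebra_simps)
qed

locale lgadmm_data =
  fixes m l :: nat and n :: "nat \<Rightarrow> nat" and A P :: "nat \<Rightarrow> real mat" and b :: "real vec"
    and \<rho> \<gamma> :: real
  assumes m_ge_2: "m \<ge> 2"
    and A_dim: "\<forall>i\<in>{1..m}. A i \<in> carrier_mat l (n i)"
    and b_dim: "b \<in> carrier_vec l"
    and rho_pos: "\<rho> > 0"
    and gamma_pos: "0 < \<gamma>"
    and P_pd: "\<forall>i\<in>{1..m}. sym_posdef (n i) (P i)"
begin

abbreviation "d \<equiv> bdim m l n"
abbreviation "blocks \<equiv> {1..m+1}"
abbreviation "H \<equiv> Hblk m l n \<rho> \<gamma> A P"
abbreviation "Q \<equiv> Qblk m l n \<rho> \<gamma> A P"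
abbreviation "M \<equiv> Mblk m l n \<rho> \<gamma> A"

lemma block_vec_x: "block_vec d blocks v \<Longrightarrow> i \<in> {1..m} \<Longrightarrow> v i \<in> carrier_vec (n i)"
  using block_vecD[of d blocks v i] by (simp add: bdim_def)

lemma block_vec_y: "block_vec d blocks v \<Longrightarrow> v (m+1) \<in> carrier_vec l"
  using block_vecD[of d blocks v "m+1"] by (simp add: bdim_def)

lemma A_carrier: "i \<in> {1..m} \<Longrightarrow> A i \<in> carrier_mat l (n i)"
  using A_dim by blast

lemma P_carrier: "i \<in> {1..m} \<Longrightarrow> P i \<in> carrier_mat (n i) (n i)"
  using P_pd by (simp add: sym_posdef_def)

lemma P_sym: "i \<in> {1..m} \<Longrightarrow> transpose_mat (P i) = P i"
  using P_pd by (simp add: sym_posdef_def)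

lemma AtA_carrier: "i \<in> {1..m} \<Longrightarrow> j \<in> {1..m} \<Longrightarrow> transpose_mat (A i) * A j \<in> carrier_mat (n i) (n j)"
  using A_carrier by (meson mult_carrier_mat transpose_carrier_mat)

lemma block_mat_H: "block_mat d blocks H"
  unfolding block_mat_def
  using A_carrier P_carrier AtA_carrier m_ge_2 by (auto simp: Hblk_def G1blk_def bdim_def)

lemma block_mat_Q: "block_mat d blocks Q"
  unfolding block_mat_def
  using A_carrier P_carrier AtA_carrier m_ge_2 by (auto simp: Qblk_def G1blk_def bdim_def)

lemma block_mat_M: "block_mat d blocks M"
  unfolding block_mat_def
  using A_carrier m_ge_2 by (auto simp: Mblk_def bdim_def)

lemma H_sym: "\<forall>i\<in>blocks. \<forall>j\<in>blocks. H i j = transpose_mat (H j i)"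
proof (intro ballI)
  fix i j assume i: "i \<in> blocks" and j: "j \<in> blocks"
  have AtA: "transpose_mat (transpose_mat (A j) * A i) = transpose_mat (A i) * A j"
    if "i \<in> {1..m}" "j \<in> {1..m}" for i j
    using A_carrier[OF that(1)] A_carrier[OF that(2)] by (simp add: transpose_mult[of _ _ l])
  have Hmm: "transpose_mat (P m + (\<rho> / \<gamma>) \<cdot>\<^sub>m (transpose_mat (A m) * A m))
      = P m + (\<rho> / \<gamma>) \<cdot>\<^sub>m (transpose_mat (A m) * A m)"
    using m_ge_2 P_carrier[of m] P_sym[of m] A_carrier[of m] AtA[of m m]
    by (subst transpose_add[of _ "n m" "n m"]) (auto simp: transpose_smult_mat)
  show "H i j = transpose_mat (H j i)"
    using i j Hmm AtA P_sym by (auto simp: Hblk_def G1blk_def bdim_def transpose_smult_mat)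
qed

lemma M_mult_vec_x:
  assumes v: "block_vec d blocks v" and i: "i \<in> {1..m}"
  shows "bmult_vec d blocks M v i = v i"
proof -
  have "bmult_vec d blocks M v i = M i i *\<^sub>v v i"
    using i v by (intro bmult_vec_one) (auto simp: Mblk_def bdim_def)
  then show ?thesis
    using i block_vec_x[OF v i] by (simp add: Mblk_def)
qed

lemma M_mult_vec_y:
  assumes v: "block_vec d blocks v"
  shows "bmult_vec d blocks M v (m+1) = (- \<rho>) \<cdot>\<^sub>v (A m *\<^sub>v v m) + \<gamma> \<cdot>\<^sub>v v (m+1)"
proof -
  have Am: "A m \<in> carrier_mat l (n m)" using A_carrier m_ge_2 by simp
  have vm: "v m \<in> carrier_vec (n m)" and vy: "v (m+1) \<in> carrier_vec l"
    using block_vec_x[OF v, of m] block_vec_y[OF v] m_ge_2 by auto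
  have "bmult_vec d blocks M v (m+1) = M (m+1) m *\<^sub>v v m + M (m+1) (m+1) *\<^sub>v v (m+1)"
    using m_ge_2 Am by (intro bmult_vec_two[OF _ _ _ _ _ v]) (auto simp: Mblk_def bdim_def)
  then show ?thesis
    using Am vm vy by (simp add: Mblk_def smult_mat_mult_vec[OF Am vm] smult_mat_mult_vec[of "1\<^sub>m l" l l])
qed

lemma HM_eq_Q:
  assumes v: "block_vec d blocks v" and i: "i \<in> blocks"
  shows "bmult_vec d blocks H (bmult_vec d blocks M v) i = bmult_vec d blocks Q v i"
proof -
  let ?w = "bmult_vec d blocks M v"
  have w: "block_vec d blocks ?w" by (rule block_vec_bmult_vec)
  have Am: "A m \<in> carrier_mat l (n m)" and Pm: "P m \<in> carrier_mat (n m) (n m)"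
    using A_carrier P_carrier m_ge_2 by auto
  have vm: "v m \<in> carrier_vec (n m)" and vy: "v (m+1) \<in> carrier_vec l"
    using block_vec_x[OF v, of m] block_vec_y[OF v] m_ge_2 by auto
  have w_x: "\<And>j. j \<in> {1..m} \<Longrightarrow> ?w j = v j" by (rule M_mult_vec_x[OF v])
  have w_y: "?w (m+1) = (- \<rho>) \<cdot>\<^sub>v (A m *\<^sub>v v m) + \<gamma> \<cdot>\<^sub>v v (m+1)" by (rule M_mult_vec_y[OF v])
  have \<gamma>: "\<gamma> \<noteq> 0" and \<rho>: "\<rho> \<noteq> 0" using gamma_pos rho_pos by auto
  consider "i < m" | "i = m" | "i = m + 1" using i by fastforce
  then show ?thesis
  proof cases
    case 1
    \<comment> \<open>In the first \<open>m - 1\<close> block rows, \<open>H\<close>, \<open>Q\<close> coincide and \<open>M\<close> acts as the identity.\<close>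
    have "bmult_vec d blocks H ?w i = vsum (d i) (\<lambda>j. H i j *\<^sub>v ?w j) {1..m-1}"
      using 1 by (intro bmult_vec_mono_neutral[OF _ _ _ w]) (auto simp: Hblk_def)
    also have "\<dots> = vsum (d i) (\<lambda>j. Q i j *\<^sub>v v j) {1..m-1}"
      using 1 w_x by (intro vsum_cong) (auto simp: Hblk_def Qblk_def)
    also have "\<dots> = bmult_vec d blocks Q v i"
      using 1 by (intro bmult_vec_mono_neutral[OF _ _ _ v, symmetric]) (auto simp: Qblk_def)
    finally show ?thesis .
  next
    case 2
    have "bmult_vec d blocks H ?w i = H m m *\<^sub>v ?w m + H m (m+1) *\<^sub>v ?w (m+1)"
      unfolding 2 using m_ge_2 Am Pm
      by (intro bmult_vec_two[OF _ _ _ _ _ w]) (auto simp: Hblk_def bdim_def)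
    also have "\<dots> = Q m m *\<^sub>v v m + Q m (m+1) *\<^sub>v v (m+1)"
      using w_x[of m] w_y m_ge_2 HM_row_x_identity[OF Am Pm vm vy \<gamma>] by (simp add: Hblk_def Qblk_def)
    also have "\<dots> = bmult_vec d blocks Q v i"
      unfolding 2 using m_ge_2 Am Pm
      by (intro bmult_vec_two[OF _ _ _ _ _ v, symmetric]) (auto simp: Qblk_def bdim_def)
    finally show ?thesis .
  next
    case 3
    have "bmult_vec d blocks H ?w i = H (m+1) m *\<^sub>v ?w m + H (m+1) (m+1) *\<^sub>v ?w (m+1)"
      unfolding 3 using m_ge_2 Am Pm
      by (intro bmult_vec_two[OF _ _ _ _ _ w]) (auto simp: Hblk_def bdim_def)
    also have "\<dots> = Q (m+1) m *\<^sub>v v m + Q (m+1) (m+1) *\<^sub>v v (m+1)"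
      using w_x[of m] w_y m_ge_2 HM_row_y_identity[OF Am vm vy \<gamma> \<rho>] by (simp add: Hblk_def Qblk_def)
    also have "\<dots> = bmult_vec d blocks Q v i"
      unfolding 3 using m_ge_2 Am Pm
      by (intro bmult_vec_two[OF _ _ _ _ _ v, symmetric]) (auto simp: Qblk_def bdim_def)
    finally show ?thesis .
  qed
qed

lemma Q_mult_vec_x_low:
  assumes v: "block_vec d blocks v" and j: "j \<in> {1..m-1}"
  shows "bmult_vec d blocks Q v j
    = P j *\<^sub>v v j + (- \<rho>) \<cdot>\<^sub>v (transpose_mat (A j) *\<^sub>v vsum l (\<lambda>i. A i *\<^sub>v v i) ({1..m-1} - {j}))"
proof -
  let ?R = "{1..m-1} - {j}"
  have Aj: "A j \<in> carrier_mat l (n j)" and Atj: "transpose_mat (A j) \<in> carrier_mat (n j) l"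
    using A_carrier j by auto
  note vi = block_vec_x[OF v]
  have Av: "\<forall>i\<in>?R. A i *\<^sub>v v i \<in> carrier_vec l"
  proof
    fix i assume "i \<in> ?R"
    then have "i \<in> {1..m}" by auto
    then show "A i *\<^sub>v v i \<in> carrier_vec l" by (meson A_carrier vi mult_mat_vec_carrier)
  qed
  have "bmult_vec d blocks Q v j = vsum (n j) (\<lambda>i. Q j i *\<^sub>v v i) (insert j ?R)"
    using j by (subst bmult_vec_mono_neutral[OF _ _ _ v, of "{1..m-1}"])
      (auto simp: Qblk_def bdim_def intro!: arg_cong[where f="vsum _ _"])
  also have "\<dots> = Q j j *\<^sub>v v j + vsum (n j) (\<lambda>i. Q j i *\<^sub>v v i) ?R"
    by (rule vsum_insert) auto
  also have "vsum (n j) (\<lambda>i. Q j i *\<^sub>v v i) ?R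
      = vsum (n j) (\<lambda>i. (- \<rho>) \<cdot>\<^sub>v (transpose_mat (A j) *\<^sub>v (A i *\<^sub>v v i))) ?R"
  proof (rule vsum_cong)
    fix i assume i: "i \<in> ?R"
    then have Ai: "A i \<in> carrier_mat l (n i)" and vi: "v i \<in> carrier_vec (n i)"
      using A_carrier vi by auto
    have "i < m" "j < m" "i \<noteq> j" using i j m_ge_2 by auto
    then have "Q j i = (- \<rho>) \<cdot>\<^sub>m (transpose_mat (A j) * A i)"
      by (simp add: Qblk_def G1blk_def)
    then show "Q j i *\<^sub>v v i = (- \<rho>) \<cdot>\<^sub>v (transpose_mat (A j) *\<^sub>v (A i *\<^sub>v v i))"
      using Atj Ai vi by (simp add: smult_mat_mult_vec[of _ "n j" "n i"])
  qed
  also have "\<dots> = (- \<rho>) \<cdot>\<^sub>v vsum (n j) (\<lambda>i. transpose_mat (A j) *\<^sub>v (A i *\<^sub>v v i)) ?R"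
    by (rule vsum_smult) (use Atj Av in auto)
  also have "vsum (n j) (\<lambda>i. transpose_mat (A j) *\<^sub>v (A i *\<^sub>v v i)) ?R
      = transpose_mat (A j) *\<^sub>v vsum l (\<lambda>i. A i *\<^sub>v v i) ?R"
    by (rule mult_mat_vec_vsum[OF _ Atj Av, symmetric]) simp
  moreover have "Q j j = P j"
    using j m_ge_2 by (auto simp: Qblk_def G1blk_def)
  ultimately show ?thesis by simp
qed

lemma Q_mult_vec_x_m:
  assumes v: "block_vec d blocks v"
  shows "bmult_vec d blocks Q v m
    = (\<rho> \<cdot>\<^sub>m (transpose_mat (A m) * A m) + P m) *\<^sub>v v m + (1 - \<gamma>) \<cdot>\<^sub>m transpose_mat (A m) *\<^sub>v v (m+1)"
proof -
  have "bmult_vec d blocks Q v m = Q m m *\<^sub>v v m + Q m (m+1) *\<^sub>v v (m+1)"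
    using m_ge_2 A_carrier[of m] P_carrier[of m]
    by (intro bmult_vec_two[OF _ _ _ _ _ v]) (auto simp: Qblk_def bdim_def)
  then show ?thesis
    using m_ge_2 by (simp add: Qblk_def)
qed

lemma Q_mult_vec_y:
  assumes v: "block_vec d blocks v"
  shows "bmult_vec d blocks Q v (m+1) = - (A m *\<^sub>v v m) + (1 / \<rho>) \<cdot>\<^sub>v v (m+1)"
proof -
  have Am: "A m \<in> carrier_mat l (n m)" using A_carrier m_ge_2 by simp
  have vm: "v m \<in> carrier_vec (n m)" and vy: "v (m+1) \<in> carrier_vec l"
    using block_vec_x[OF v, of m] block_vec_y[OF v] m_ge_2 by auto
  have "bmult_vec d blocks Q v (m+1) = Q (m+1) m *\<^sub>v v m + Q (m+1) (m+1) *\<^sub>v v (m+1)"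
    using m_ge_2 Am P_carrier[of m]
    by (intro bmult_vec_two[OF _ _ _ _ _ v]) (auto simp: Qblk_def bdim_def)
  then show ?thesis
    using m_ge_2 Am vm vy by (simp add: Qblk_def smult_mat_mult_vec[of "1\<^sub>m l" l l])
qed

end

section \<open>The L-GADMM iteration\<close>

locale lgadmm = lgadmm_data +
  fixes \<theta> :: "nat \<Rightarrow> real vec \<Rightarrow> real" and X :: "nat \<Rightarrow> real vec set"
    and x :: "nat \<Rightarrow> nat \<Rightarrow> real vec" and y :: "nat \<Rightarrow> real vec"
  assumes theta_convex: "\<forall>i\<in>{1..m}. convex_vfun (n i) (\<theta> i)"
    and X_convex: "\<forall>i\<in>{1..m}. convex_vset (n i) (X i)"
    and init: "\<forall>i\<in>{1..m}. x 0 i \<in> X i" "y 0 \<in> carrier_vec l"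
    and step_j: "\<forall>k. \<forall>j\<in>{1..m-1}. is_arg_min
        (\<lambda>z. \<theta> j z + \<rho> / 2 * sqn (A j *\<^sub>v z + vsum l (\<lambda>i. A i *\<^sub>v x k i) ({1..m} - {j}) - b
                 - (1 / \<rho>) \<cdot>\<^sub>v y k) + 1 / 2 * gnorm2 (P j) (z - x k j))
        (\<lambda>z. z \<in> X j) (x (Suc k) j)"
    and step_m: "\<forall>k. is_arg_min
        (\<lambda>z. \<theta> m z + \<rho> / 2 * sqn (\<gamma> \<cdot>\<^sub>v vsum l (\<lambda>i. A i *\<^sub>v x (Suc k) i) {1..m-1}
                 + (1 - \<gamma>) \<cdot>\<^sub>v (b - A m *\<^sub>v x k m) + A m *\<^sub>v z - b - (1 / \<rho>) \<cdot>\<^sub>v y k)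
             + 1 / 2 * gnorm2 (P m) (z - x k m))
        (\<lambda>z. z \<in> X m) (x (Suc k) m)"
    and step_y: "\<forall>k. y (Suc k) = y k - \<rho> \<cdot>\<^sub>v (\<gamma> \<cdot>\<^sub>v vsum l (\<lambda>i. A i *\<^sub>v x (Suc k) i) {1..m-1}
                 + (1 - \<gamma>) \<cdot>\<^sub>v (b - A m *\<^sub>v x k m) + A m *\<^sub>v x (Suc k) m - b)"
begin

definition ybar :: "nat \<Rightarrow> real vec" where
  "ybar k = y k - \<rho> \<cdot>\<^sub>v (vsum l (\<lambda>i. A i *\<^sub>v x (Suc k) i) {1..m-1} + A m *\<^sub>v x k m - b)"

abbreviation "w k \<equiv> wvec m (x k) (y k)"
abbreviation "wbar k \<equiv> wvec m (x (Suc k)) (ybar k)"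

lemma x_in_X: "i \<in> {1..m} \<Longrightarrow> x k i \<in> X i"
proof (cases k)
  case 0
  then show "i \<in> {1..m} \<Longrightarrow> x k i \<in> X i" using init(1) by simp
next
  case (Suc k')
  assume i: "i \<in> {1..m}"
  then consider "i \<in> {1..m-1}" | "i = m" by fastforce
  then show ?thesis
    using step_j step_m unfolding Suc is_arg_min_def by cases blast+
qed

lemma x_carrier: "i \<in> {1..m} \<Longrightarrow> x k i \<in> carrier_vec (n i)"
  using x_in_X[of i k] X_convex unfolding convex_vset_def by blast

lemma y_carrier: "y k \<in> carrier_vec l"
proof (induction k)
  case 0
  show ?case by (rule init(2))
next
  case (Suc k)
  have m: "m \<in> {1..m}" using m_ge_2 by simp
  then show ?case
    using Suc step_y b_dim A_carrier[OF m] x_carrier[OF m] by simp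
qed

lemma ybar_carrier: "ybar k \<in> carrier_vec l"
proof -
  have m: "m \<in> {1..m}" using m_ge_2 by simp
  then show ?thesis
    using y_carrier b_dim A_carrier[OF m] x_carrier[OF m] by (simp add: ybar_def)
qed

lemma block_vec_w: "block_vec d blocks (w k)"
  by (rule block_vec_wvec) (simp_all add: x_carrier y_carrier)

lemma block_vec_wbar: "block_vec d blocks (wbar k)"
  by (rule block_vec_wvec) (simp_all add: x_carrier ybar_carrier)

lemma block_vec_w_minus_wbar: "block_vec d blocks (wdiff (w k) (wbar k))"
  by (rule block_vec_wdiff[OF block_vec_w block_vec_wbar])

lemma w_minus_wbar_x: "i \<le> m \<Longrightarrow> wdiff (w k) (wbar k) i = x k i - x (Suc k) i"
  by (rule wdiff_wvec_x)

lemma w_minus_wbar_y: "wdiff (w k) (wbar k) (Suc m) = y k - ybar k"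
  by (rule wdiff_wvec_y)

lemma Ax_carrier: "i \<in> {1..m} \<Longrightarrow> A i *\<^sub>v x k i \<in> carrier_vec l"
  using A_carrier x_carrier by (meson mult_mat_vec_carrier)

lemma residual_x_low:
  assumes j: "j \<in> {1..m-1}"
  shows "\<rho> \<cdot>\<^sub>v (A j *\<^sub>v x (Suc k) j + (vsum l (\<lambda>i. A i *\<^sub>v x k i) ({1..m} - {j}) - b - (1 / \<rho>) \<cdot>\<^sub>v y k))
    = - ybar k - (- \<rho>) \<cdot>\<^sub>v vsum l (\<lambda>i. A i *\<^sub>v (x k i - x (Suc k) i)) ({1..m-1} - {j})"
proof -
  let ?R = "{1..m-1} - {j}"
  define Sk Sb where "Sk = vsum l (\<lambda>i. A i *\<^sub>v x k i) ?R" and "Sb = vsum l (\<lambda>i. A i *\<^sub>v x (Suc k) i) ?R"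
  define u v where "u = A j *\<^sub>v x (Suc k) j" and "v = A m *\<^sub>v x k m"
  have jm: "j \<in> {1..m}" "m \<in> {1..m}" and R: "\<And>i. i \<in> ?R \<Longrightarrow> i \<in> {1..m}"
    using j m_ge_2 by auto
  have carrier: "Sk \<in> carrier_vec l" "Sb \<in> carrier_vec l" "u \<in> carrier_vec l" "v \<in> carrier_vec l"
    using Ax_carrier jm by (simp_all add: Sk_def Sb_def u_def v_def)
  have split_k: "{1..m} - {j} = insert m ?R" and split_Suc: "{1..m-1} = insert j ?R"
    and m: "m \<notin> ?R"
    using j m_ge_2 by auto
  have S_k: "vsum l (\<lambda>i. A i *\<^sub>v x k i) ({1..m} - {j}) = v + Sk"
    unfolding Sk_def v_def by (subst split_k, rule vsum_insert) (use m in auto)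
  have S_Suc: "vsum l (\<lambda>i. A i *\<^sub>v x (Suc k) i) {1..m-1} = u + Sb"
    unfolding Sb_def u_def by (subst split_Suc, rule vsum_insert) auto
  have "vsum l (\<lambda>i. A i *\<^sub>v (x k i - x (Suc k) i)) ?R
      = vsum l (\<lambda>i. A i *\<^sub>v x k i - A i *\<^sub>v x (Suc k) i) ?R"
  proof (rule vsum_cong)
    fix i assume "i \<in> ?R"
    then have i: "i \<in> {1..m}" by auto
    show "A i *\<^sub>v (x k i - x (Suc k) i) = A i *\<^sub>v x k i - A i *\<^sub>v x (Suc k) i"
      by (rule mult_minus_distrib_mat_vec[OF A_carrier[OF i] x_carrier[OF i] x_carrier[OF i]])
  qed
  also have "\<dots> = Sk - Sb"
    unfolding Sk_def Sb_def using R Ax_carrier by (intro vsum_diff) blast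
  finally have T: "vsum l (\<lambda>i. A i *\<^sub>v (x k i - x (Suc k) i)) ?R = Sk - Sb" .
  show ?thesis
    unfolding ybar_def S_k S_Suc T u_def[symmetric] v_def[symmetric]
    using rho_pos b_dim y_carrier[of k] carrier by (intro eq_vecI) (auto simp: field_simps)
qed

lemma residual_x_m:
  "\<rho> \<cdot>\<^sub>v (A m *\<^sub>v x (Suc k) m + (\<gamma> \<cdot>\<^sub>v vsum l (\<lambda>i. A i *\<^sub>v x (Suc k) i) {1..m-1}
       + (1 - \<gamma>) \<cdot>\<^sub>v (b - A m *\<^sub>v x k m) - b - (1 / \<rho>) \<cdot>\<^sub>v y k))
    = - ybar k - (\<rho> \<cdot>\<^sub>v (A m *\<^sub>v (x k m - x (Suc k) m)) + (1 - \<gamma>) \<cdot>\<^sub>v (y k - ybar k))"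
proof -
  define S u v where "S = vsum l (\<lambda>i. A i *\<^sub>v x (Suc k) i) {1..m-1}"
    and "u = A m *\<^sub>v x (Suc k) m" and "v = A m *\<^sub>v x k m"
  have m: "m \<in> {1..m}" using m_ge_2 by simp
  have carrier: "S \<in> carrier_vec l" "u \<in> carrier_vec l" "v \<in> carrier_vec l"
    using Ax_carrier[OF m] by (simp_all add: S_def u_def v_def)
  have "A m *\<^sub>v (x k m - x (Suc k) m) = v - u"
    unfolding u_def v_def
    by (rule mult_minus_distrib_mat_vec[OF A_carrier[OF m] x_carrier[OF m] x_carrier[OF m]])
  then show ?thesis
    unfolding ybar_def S_def[symmetric] u_def[symmetric] v_def[symmetric]
    using rho_pos b_dim y_carrier[of k] carrier by (intro eq_vecI) (auto simp: field_simps)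
qed


lemma prox_gradient_x_low:
  assumes j: "j \<in> {1..m-1}"
  shows "\<rho> \<cdot>\<^sub>v (transpose_mat (A j) *\<^sub>v (A j *\<^sub>v x (Suc k) j
        + (vsum l (\<lambda>i. A i *\<^sub>v x k i) ({1..m} - {j}) - b - (1 / \<rho>) \<cdot>\<^sub>v y k)))
      + P j *\<^sub>v (x (Suc k) j - x k j)
    = - (transpose_mat (A j) *\<^sub>v ybar k) - bmult_vec d blocks Q (wdiff (w k) (wbar k)) j"
proof -
  let ?T = "vsum l (\<lambda>i. A i *\<^sub>v (x k i - x (Suc k) i)) ({1..m-1} - {j})"
  have jm: "j \<in> {1..m}" using j by auto
  have At: "transpose_mat (A j) \<in> carrier_mat (n j) l" using A_carrier[OF jm] by simp
  have "vsum l (\<lambda>i. A i *\<^sub>v wdiff (w k) (wbar k) i) ({1..m-1} - {j}) = ?T"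
    by (intro vsum_cong) (auto simp: wdiff_def wvec_def)
  then have "bmult_vec d blocks Q (wdiff (w k) (wbar k)) j
      = P j *\<^sub>v (x k j - x (Suc k) j) + transpose_mat (A j) *\<^sub>v ((- \<rho>) \<cdot>\<^sub>v ?T)"
    using Q_mult_vec_x_low[OF block_vec_w_minus_wbar j] jm
    by (simp add: w_minus_wbar_x mult_mat_vec[OF At])
  moreover have "\<rho> \<cdot>\<^sub>v (transpose_mat (A j) *\<^sub>v (A j *\<^sub>v x (Suc k) j
        + (vsum l (\<lambda>i. A i *\<^sub>v x k i) ({1..m} - {j}) - b - (1 / \<rho>) \<cdot>\<^sub>v y k)))
      + P j *\<^sub>v (x (Suc k) j - x k j)
    = - (transpose_mat (A j) *\<^sub>v ybar k) - (P j *\<^sub>v (x k j - x (Suc k) j) + transpose_mat (A j) *\<^sub>v ((- \<rho>) \<cdot>\<^sub>v ?T))"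
    using At P_carrier[OF jm] Ax_carrier[OF jm] b_dim y_carrier[of k] ybar_carrier x_carrier[OF jm]
    by (intro transpose_residual_gradient residual_x_low[OF j]) auto
  ultimately show ?thesis by simp
qed

lemma prox_gradient_x_m:
  "\<rho> \<cdot>\<^sub>v (transpose_mat (A m) *\<^sub>v (A m *\<^sub>v x (Suc k) m + (\<gamma> \<cdot>\<^sub>v vsum l (\<lambda>i. A i *\<^sub>v x (Suc k) i) {1..m-1}
        + (1 - \<gamma>) \<cdot>\<^sub>v (b - A m *\<^sub>v x k m) - b - (1 / \<rho>) \<cdot>\<^sub>v y k)))
      + P m *\<^sub>v (x (Suc k) m - x k m)
    = - (transpose_mat (A m) *\<^sub>v ybar k) - bmult_vec d blocks Q (wdiff (w k) (wbar k)) m"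
proof -
  have m: "m \<in> {1..m}" using m_ge_2 by simp
  let ?s = "\<rho> \<cdot>\<^sub>v (A m *\<^sub>v (x k m - x (Suc k) m)) + (1 - \<gamma>) \<cdot>\<^sub>v (y k - ybar k)"
  have At: "transpose_mat (A m) \<in> carrier_mat (n m) l" using A_carrier[OF m] by simp
  have "bmult_vec d blocks Q (wdiff (w k) (wbar k)) m = P m *\<^sub>v (x k m - x (Suc k) m) + transpose_mat (A m) *\<^sub>v ?s"
    using Q_mult_vec_x_m[OF block_vec_w_minus_wbar] Q_row_m_as_transpose[OF A_carrier[OF m] P_carrier[OF m]]
      x_carrier[OF m] y_carrier[of k] ybar_carrier
    by (simp add: w_minus_wbar_x w_minus_wbar_y)
  moreover have "\<rho> \<cdot>\<^sub>v (transpose_mat (A m) *\<^sub>v (A m *\<^sub>v x (Suc k) m + (\<gamma> \<cdot>\<^sub>v vsum l (\<lambda>i. A i *\<^sub>v x (Suc k) i) {1..m-1}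
        + (1 - \<gamma>) \<cdot>\<^sub>v (b - A m *\<^sub>v x k m) - b - (1 / \<rho>) \<cdot>\<^sub>v y k)))
      + P m *\<^sub>v (x (Suc k) m - x k m)
    = - (transpose_mat (A m) *\<^sub>v ybar k) - (P m *\<^sub>v (x k m - x (Suc k) m) + transpose_mat (A m) *\<^sub>v ?s)"
    using At P_carrier[OF m] Ax_carrier[OF m] A_carrier[OF m] b_dim y_carrier[of k] ybar_carrier x_carrier[OF m]
    by (intro transpose_residual_gradient residual_x_m) auto
  ultimately show ?thesis by simp
qed

lemma Q_mult_vec_dual_residual:
  "bmult_vec d blocks Q (wdiff (w k) (wbar k)) (m+1) = vsum l (\<lambda>i. A i *\<^sub>v x (Suc k) i) {1..m} - b"
proof -
  have m: "m \<in> {1..m}" using m_ge_2 by simp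
  define S u v where "S = vsum l (\<lambda>i. A i *\<^sub>v x (Suc k) i) {1..m-1}"
    and "u = A m *\<^sub>v x (Suc k) m" and "v = A m *\<^sub>v x k m"
  have carrier: "S \<in> carrier_vec l" "u \<in> carrier_vec l" "v \<in> carrier_vec l"
    using Ax_carrier[OF m] by (simp_all add: S_def u_def v_def)
  have "{1..m} = insert m {1..m-1}" "m \<notin> {1..m-1}" using m_ge_2 by auto
  then have sum: "vsum l (\<lambda>i. A i *\<^sub>v x (Suc k) i) {1..m} = u + S"
    unfolding S_def u_def by (simp add: vsum_insert)
  have "A m *\<^sub>v (x k m - x (Suc k) m) = v - u"
    unfolding u_def v_def
    by (rule mult_minus_distrib_mat_vec[OF A_carrier[OF m] x_carrier[OF m] x_carrier[OF m]])
  then have "bmult_vec d blocks Q (wdiff (w k) (wbar k)) (m+1) = - (v - u) + (1 / \<rho>) \<cdot>\<^sub>v (y k - ybar k)"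
    using Q_mult_vec_y[OF block_vec_w_minus_wbar, of k] m_ge_2 by (simp add: w_minus_wbar_x w_minus_wbar_y)
  also have "y k - ybar k = \<rho> \<cdot>\<^sub>v (S + v - b)"
    unfolding ybar_def S_def[symmetric] v_def[symmetric]
    using y_carrier[of k] carrier b_dim by (intro eq_vecI) auto
  finally show ?thesis
    unfolding sum using rho_pos b_dim carrier by (intro eq_vecI) (auto simp: field_simps)
qed

lemma prox_step_optimality:
  assumes i: "i \<in> {1..m}" and z: "z \<in> X i"
  shows "\<theta> i z - \<theta> i (x (Suc k) i)
    + (z - x (Suc k) i) \<bullet> (- (transpose_mat (A i) *\<^sub>v ybar k) - bmult_vec d blocks Q (wdiff (w k) (wbar k)) i) \<ge> 0"
proof -
  have convex: "convex_vfun (n i) (\<theta> i)" "convex_vset (n i) (X i)"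
    using theta_convex X_convex i by auto
  consider (low) "i \<in> {1..m-1}" | (last) "i = m" using i by fastforce
  then show ?thesis
  proof cases
    case low
    let ?c = "vsum l (\<lambda>j. A j *\<^sub>v x k j) ({1..m} - {i}) - b - (1 / \<rho>) \<cdot>\<^sub>v y k"
    have "\<theta> i z - \<theta> i (x (Suc k) i) + (z - x (Suc k) i) \<bullet> (\<rho> \<cdot>\<^sub>v (transpose_mat (A i)
        *\<^sub>v (A i *\<^sub>v x (Suc k) i + ?c)) + P i *\<^sub>v (x (Suc k) i - x k i)) \<ge> 0"
    proof (rule is_arg_min_prox_optimality[OF convex A_carrier[OF i] _ _ P_carrier[OF i] P_sym[OF i]
          x_carrier[OF i] _ z])
      show "?c \<in> carrier_vec l" using b_dim y_carrier[of k] by simp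
      show "A i *\<^sub>v z + vsum l (\<lambda>j. A j *\<^sub>v x k j) ({1..m} - {i}) - b - (1 / \<rho>) \<cdot>\<^sub>v y k = A i *\<^sub>v z + ?c"
        if "z \<in> carrier_vec (n i)" for z
        using that A_carrier[OF i] b_dim y_carrier[of k] by (intro eq_vecI) auto
    qed (use step_j low in blast)
    then show ?thesis using prox_gradient_x_low[OF low] by simp
  next
    case last
    note m = i[unfolded last] and z = z[unfolded last] and convex = convex[unfolded last]
    let ?c = "\<gamma> \<cdot>\<^sub>v vsum l (\<lambda>j. A j *\<^sub>v x (Suc k) j) {1..m-1} + (1 - \<gamma>) \<cdot>\<^sub>v (b - A m *\<^sub>v x k m)
      - b - (1 / \<rho>) \<cdot>\<^sub>v y k"
    have "\<theta> m z - \<theta> m (x (Suc k) m) + (z - x (Suc k) m) \<bullet> (\<rho> \<cdot>\<^sub>v (transpose_mat (A m)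
        *\<^sub>v (A m *\<^sub>v x (Suc k) m + ?c)) + P m *\<^sub>v (x (Suc k) m - x k m)) \<ge> 0"
    proof (rule is_arg_min_prox_optimality[OF convex A_carrier[OF m] _ _ P_carrier[OF m] P_sym[OF m]
          x_carrier[OF m] _ z])
      show "?c \<in> carrier_vec l" using b_dim y_carrier[of k] Ax_carrier[OF m] by simp
      show "\<gamma> \<cdot>\<^sub>v vsum l (\<lambda>j. A j *\<^sub>v x (Suc k) j) {1..m-1} + (1 - \<gamma>) \<cdot>\<^sub>v (b - A m *\<^sub>v x k m)
          + A m *\<^sub>v z - b - (1 / \<rho>) \<cdot>\<^sub>v y k = A m *\<^sub>v z + ?c"
        if "z \<in> carrier_vec (n m)" for z
        using that A_carrier[OF m] b_dim y_carrier[of k] Ax_carrier[OF m] by (intro eq_vecI) auto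
    qed (use step_m in blast)
    then show ?thesis using prox_gradient_x_m last by simp
  qed
qed

lemma block_optimality:
  assumes i: "i \<in> {1..m}" and z: "z \<in> X i"
  shows "\<theta> i (x (Suc k) i) - \<theta> i z + (x (Suc k) i - z) \<bullet> Fblk m l A b (x (Suc k)) (ybar k) i
    \<le> (x (Suc k) i - z) \<bullet> bmult_vec d blocks Q (wdiff (w k) (wbar k)) i"
proof -
  have "z \<in> carrier_vec (n i)" using z i X_convex by (auto simp: convex_vset_def)
  moreover have "transpose_mat (A i) *\<^sub>v ybar k \<in> carrier_vec (n i)"
    using A_carrier[OF i] ybar_carrier by simp
  moreover have "bmult_vec d blocks Q (wdiff (w k) (wbar k)) i \<in> carrier_vec (n i)"
    using bmult_vec_carrier[of d blocks Q _ i] i by (simp add: bdim_def)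
  ultimately have "(z - x (Suc k) i) \<bullet> (- (transpose_mat (A i) *\<^sub>v ybar k) - bmult_vec d blocks Q (wdiff (w k) (wbar k)) i)
      = - ((x (Suc k) i - z) \<bullet> - (transpose_mat (A i) *\<^sub>v ybar k))
        + (x (Suc k) i - z) \<bullet> bmult_vec d blocks Q (wdiff (w k) (wbar k)) i"
    using x_carrier[OF i] by (intro scalar_prod_diff_neg_add)
  moreover have "Fblk m l A b (x (Suc k)) (ybar k) i = - (transpose_mat (A i) *\<^sub>v ybar k)"
    using i by (simp add: Fblk_def)
  ultimately show ?thesis
    using prox_step_optimality[OF i z, of k] by simp
qed

lemma sum_blocks_split: "(\<Sum>i\<in>blocks. f i) = f (m+1) + (\<Sum>i\<in>{1..m}. f i)"
  by (simp add: add.commute)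

text \<open>The two proximal steps make \<open>w\<^sup>~\<^sup>k\<close> a solution of the variational inequality defining
  \<open>W\<^sup>*\<close>, up to the correction term \<open>(w\<^sup>~\<^sup>k - w)\<^sup>T Q (w\<^sup>k - w\<^sup>~\<^sup>k)\<close>.\<close>
lemma auxiliary_variational_inequality:
  assumes u: "\<forall>i\<in>{1..m}. u i \<in> X i" and yu: "yu \<in> carrier_vec l"
  shows "(\<Sum>i\<in>{1..m}. \<theta> i (x (Suc k) i)) - (\<Sum>i\<in>{1..m}. \<theta> i (u i))
      + (\<Sum>i\<in>blocks. wdiff (wbar k) (wvec m u yu) i \<bullet> Fblk m l A b (x (Suc k)) (ybar k) i)
    \<le> bform blocks Q (wdiff (wbar k) (wvec m u yu)) (wdiff (w k) (wbar k))"
proof -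
  let ?g = "wdiff (wbar k) (wvec m u yu)" and ?Qd = "bmult_vec d blocks Q (wdiff (w k) (wbar k))"
  have g_x: "\<And>i. i \<in> {1..m} \<Longrightarrow> ?g i = x (Suc k) i - u i" by (simp add: wdiff_wvec_x)
  have "(\<Sum>i\<in>{1..m}. \<theta> i (x (Suc k) i) - \<theta> i (u i) + ?g i \<bullet> Fblk m l A b (x (Suc k)) (ybar k) i)
      \<le> (\<Sum>i\<in>{1..m}. ?g i \<bullet> ?Qd i)"
    using u g_x block_optimality by (intro sum_mono) simp
  moreover have "?g (m+1) \<bullet> Fblk m l A b (x (Suc k)) (ybar k) (m+1) = ?g (m+1) \<bullet> ?Qd (m+1)"
    using Q_mult_vec_dual_residual[of k] by (simp add: Fblk_def)
  moreover have "bform blocks Q ?g (wdiff (w k) (wbar k)) = (\<Sum>i\<in>blocks. ?g i \<bullet> ?Qd i)"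
    by (rule bform_bmult_vec[OF _ block_mat_Q block_vec_w_minus_wbar]) simp
  ultimately show ?thesis
    unfolding sum_blocks_split by (simp add: sum.distrib sum_subtractf)
qed

lemma Q_pairing_nonneg:
  assumes ws: "(xs, ys) \<in> Wstar m l n \<theta> X A b"
  shows "bform blocks Q (wdiff (wbar k) (wvec m xs ys)) (wdiff (w k) (wbar k)) \<ge> 0"
proof -
  have xs: "\<forall>i\<in>{1..m}. xs i \<in> X i" and ys: "ys \<in> carrier_vec l"
    and VI: "\<And>u yu. \<forall>i\<in>{1..m}. u i \<in> X i \<Longrightarrow> yu \<in> carrier_vec l \<Longrightarrow>
      (\<Sum>i\<in>{1..m}. \<theta> i (u i)) - (\<Sum>i\<in>{1..m}. \<theta> i (xs i))
      + (\<Sum>i\<in>blocks. wdiff (wvec m u yu) (wvec m xs ys) i \<bullet> Fblk m l A b xs ys i) \<ge> 0"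
    using ws by (auto simp: Wstar_def)
  have xs_carrier: "xs i \<in> carrier_vec (n i)" if "i \<in> {1..m}" for i
    using xs X_convex that unfolding convex_vset_def by blast
  have "(\<Sum>i\<in>blocks. wdiff (wbar k) (wvec m xs ys) i \<bullet> Fblk m l A b (x (Suc k)) (ybar k) i)
      = (\<Sum>i\<in>blocks. wdiff (wbar k) (wvec m xs ys) i \<bullet> Fblk m l A b xs ys i)"
    by (rule Fblk_skew_pairing[OF A_dim b_dim x_carrier xs_carrier ybar_carrier ys])
  then show ?thesis
    using VI[of "x (Suc k)" "ybar k"] x_in_X ybar_carrier auxiliary_variational_inequality[OF xs ys, of k]
    by simp
qed

lemma w_Suc_eq:
  assumes xs: "\<And>i. i \<in> {1..m} \<Longrightarrow> xs i \<in> carrier_vec (n i)" and ys: "ys \<in> carrier_vec l"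
    and i: "i \<in> blocks"
  shows "wdiff (w (Suc k)) (wvec m xs ys) i
    = wdiff (w k) (wvec m xs ys) i - bmult_vec d blocks M (wdiff (w k) (wbar k)) i"
proof (cases "i \<le> m")
  case True
  then have i: "i \<in> {1..m}" using i by simp
  show ?thesis
    using M_mult_vec_x[OF block_vec_w_minus_wbar i] x_carrier[OF i, of k] x_carrier[OF i, of "Suc k"] xs[OF i]
    by (simp add: wdiff_wvec_x w_minus_wbar_x True) (intro eq_vecI; auto)
next
  case False
  then have i: "i = Suc m" using i by simp
  have m: "m \<in> {1..m}" using m_ge_2 by simp
  define S u v where "S = vsum l (\<lambda>i. A i *\<^sub>v x (Suc k) i) {1..m-1}"
    and "u = A m *\<^sub>v x (Suc k) m" and "v = A m *\<^sub>v x k m"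
  have carrier: "S \<in> carrier_vec l" "u \<in> carrier_vec l" "v \<in> carrier_vec l"
    using Ax_carrier[OF m] by (simp_all add: S_def u_def v_def)
  have "A m *\<^sub>v (x k m - x (Suc k) m) = v - u"
    unfolding u_def v_def
    by (rule mult_minus_distrib_mat_vec[OF A_carrier[OF m] x_carrier[OF m] x_carrier[OF m]])
  then have "bmult_vec d blocks M (wdiff (w k) (wbar k)) (Suc m) = (- \<rho>) \<cdot>\<^sub>v (v - u) + \<gamma> \<cdot>\<^sub>v (y k - ybar k)"
    using M_mult_vec_y[OF block_vec_w_minus_wbar, of k] by (simp add: w_minus_wbar_x w_minus_wbar_y)
  moreover have "y k - ybar k = \<rho> \<cdot>\<^sub>v (S + v - b)"
    unfolding ybar_def S_def[symmetric] v_def[symmetric]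
    using y_carrier[of k] carrier b_dim by (intro eq_vecI) auto
  moreover have "y (Suc k) = y k - \<rho> \<cdot>\<^sub>v (\<gamma> \<cdot>\<^sub>v S + (1 - \<gamma>) \<cdot>\<^sub>v (b - v) + u - b)"
    using step_y by (simp add: S_def u_def v_def)
  ultimately show ?thesis
    unfolding i wdiff_wvec_y using y_carrier[of k] ys carrier b_dim
    by (intro eq_vecI) (auto simp: algebra_simps)
qed

lemma H_norm_decrease:
  assumes ws: "(xs, ys) \<in> Wstar m l n \<theta> X A b"
  shows "bqf blocks H (wdiff (w (Suc k)) (wvec m xs ys))
    \<le> bqf blocks H (wdiff (w k) (wvec m xs ys)) - bqf blocks (Nblk m l n \<rho> \<gamma> A P) (wdiff (w k) (wbar k))"
proof -
  have xs: "xs i \<in> carrier_vec (n i)" if "i \<in> {1..m}" for i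
    using ws X_convex that unfolding Wstar_def convex_vset_def by blast
  have ys: "ys \<in> carrier_vec l" using ws by (simp add: Wstar_def)
  have ws_vec: "block_vec d blocks (wvec m xs ys)" by (rule block_vec_wvec[OF xs ys])
  show ?thesis
    unfolding bqf_eq_bform Nblk_def Let_def
  proof (rule bform_contraction[OF _ block_mat_H block_mat_Q block_mat_M H_sym HM_eq_Q])
    show "\<And>i. i \<in> blocks \<Longrightarrow> wdiff (wbar k) (wvec m xs ys) i
        = wdiff (w k) (wvec m xs ys) i - wdiff (w k) (wbar k) i"
      by (rule wdiff_eq_diff_wdiff[OF block_vec_w block_vec_wbar ws_vec])
    show "\<And>i. i \<in> blocks \<Longrightarrow> wdiff (w (Suc k)) (wvec m xs ys) i
        = wdiff (w k) (wvec m xs ys) i - bmult_vec d blocks M (wdiff (w k) (wbar k)) i"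
      by (rule w_Suc_eq[OF xs ys])
  qed (use Q_pairing_nonneg[OF ws] block_vec_wdiff[OF block_vec_w ws_vec]
      block_vec_wdiff[OF block_vec_wbar ws_vec] block_vec_w_minus_wbar in auto)
qed

end

theorem lemma3p3:
  fixes m l :: nat and n :: "nat \<Rightarrow> nat"
    and \<theta> :: "nat \<Rightarrow> real vec \<Rightarrow> real" and X :: "nat \<Rightarrow> real vec set"
    and A P :: "nat \<Rightarrow> real mat" and b :: "real vec"
    and \<rho> \<gamma> :: real
    and x :: "nat \<Rightarrow> nat \<Rightarrow> real vec" and y :: "nat \<Rightarrow> real vec"
  assumes m2: "m \<ge> 2" and lpos: "l > 0" and npos: "\<forall>i\<in>{1..m}. n i > 0"
    and theta_convex: "\<forall>i\<in>{1..m}. convex_vfun (n i) (\<theta> i)"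
    and X_nonempty: "\<forall>i\<in>{1..m}. X i \<noteq> {}"
    and X_convex: "\<forall>i\<in>{1..m}. convex_vset (n i) (X i)"
    and X_closed: "\<forall>i\<in>{1..m}. closed_vset (n i) (X i)"
    and A_dim: "\<forall>i\<in>{1..m}. A i \<in> carrier_mat l (n i)"
    and A_rank: "\<forall>i\<in>{1..m}. full_col_rank (A i)"
    and b_dim: "b \<in> carrier_vec l"
    and P_solvable: "\<exists>xs. (\<forall>i\<in>{1..m}. xs i \<in> X i) \<and> vsum l (\<lambda>i. A i *\<^sub>v xs i) {1..m} = b \<and>
        (\<forall>x'. (\<forall>i\<in>{1..m}. x' i \<in> X i) \<and> vsum l (\<lambda>i. A i *\<^sub>v x' i) {1..m} = b \<longrightarrow>
           (\<Sum>i\<in>{1..m}. \<theta> i (xs i)) \<le> (\<Sum>i\<in>{1..m}. \<theta> i (x' i)))"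
    and Wstar_nonempty: "Wstar m l n \<theta> X A b \<noteq> {}"
    and rho_pos: "\<rho> > 0" and gamma: "0 < \<gamma>" "\<gamma> < 2"
    and P_pd: "\<forall>i\<in>{1..m}. sym_posdef (n i) (P i)"
    and G1_pd: "\<forall>R. (\<forall>i\<in>{1..m-1}. R i \<in> carrier_vec (n i)) \<and> (\<exists>i\<in>{1..m-1}. R i \<noteq> 0\<^sub>v (n i))
        \<longrightarrow> bqf {1..m-1} (G1blk m \<rho> A P) R > 0"
    and init: "\<forall>i\<in>{1..m}. x 0 i \<in> X i" "y 0 \<in> carrier_vec l"
    and step_j: "\<forall>k. \<forall>j\<in>{1..m-1}. is_arg_min
        (\<lambda>z. \<theta> j z + \<rho> / 2 * sqn (A j *\<^sub>v z + vsum l (\<lambda>i. A i *\<^sub>v x k i) ({1..m} - {j}) - b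
                 - (1 / \<rho>) \<cdot>\<^sub>v y k) + 1 / 2 * gnorm2 (P j) (z - x k j))
        (\<lambda>z. z \<in> X j) (x (Suc k) j)"
    and step_m: "\<forall>k. is_arg_min
        (\<lambda>z. \<theta> m z + \<rho> / 2 * sqn (\<gamma> \<cdot>\<^sub>v vsum l (\<lambda>i. A i *\<^sub>v x (Suc k) i) {1..m-1}
                 + (1 - \<gamma>) \<cdot>\<^sub>v (b - A m *\<^sub>v x k m) + A m *\<^sub>v z - b - (1 / \<rho>) \<cdot>\<^sub>v y k)
             + 1 / 2 * gnorm2 (P m) (z - x k m))
        (\<lambda>z. z \<in> X m) (x (Suc k) m)"
    and step_y: "\<forall>k. y (Suc k) = y k - \<rho> \<cdot>\<^sub>v (\<gamma> \<cdot>\<^sub>v vsum l (\<lambda>i. A i *\<^sub>v x (Suc k) i) {1..m-1}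
                 + (1 - \<gamma>) \<cdot>\<^sub>v (b - A m *\<^sub>v x k m) + A m *\<^sub>v x (Suc k) m - b)"
  shows "\<forall>k. \<forall>(xs, ys)\<in>Wstar m l n \<theta> X A b.
    (let H = Hblk m l n \<rho> \<gamma> A P; N = Nblk m l n \<rho> \<gamma> A P; I = {1..m+1};
         wk = wvec m (x k) (y k); wk1 = wvec m (x (Suc k)) (y (Suc k)); ws = wvec m xs ys;
         wbar = wvec m (x (Suc k))
                  (y k - \<rho> \<cdot>\<^sub>v (vsum l (\<lambda>i. A i *\<^sub>v x (Suc k) i) {1..m-1} + A m *\<^sub>v x k m - b))
     in bqf I H (wdiff wk1 ws) \<le> bqf I H (wdiff wk ws) - bqf I N (wdiff wk wbar))"
proof -
  interpret lgadmm m l n A P b \<rho> \<gamma> \<theta> X x y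
    by unfold_locales (rule assms)+
  show ?thesis
    using H_norm_decrease unfolding Let_def ybar_def by blast
qed

end
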